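(* The full subcategory $\mathbf{T_D Top_S}$ of $\mathbf{Top_S}$ consisting of $T_D$-spaces is equivalent to the opposite of the full subcategory $\mathbf{STDMT_P}$ of $\mathbf{MT_P}$ consisting of spatial $T_D$-algebras.
   Context: A space is $T_D$ if every point $x$ is locally closed ($\{x\}$ is closed in some open neighborhood of $x$). Soberification: $sX=\mathrm{pt}\,\Omega X$ (completely prime filters of the frame of opens), $\lambda_X(x)=\{U\text{ open}: x\in U\}$. A sober map $f:X\rightsquigarrow Y$ is a continuous map $X\to sY$; composition $g\bullet f=\lambda_{sZ}^{-1}\circ sg\circ f$, identities $\lambda_X$; this is $\mathbf{Top_S}$. An MT-algebra is a complete boolean algebra $M$ with $\square$ satisfying $\square1=1$, $\square(a\wedge b)=\square a\wedge\square b$, $\square a\le a$, $\square a\le\square\square a$; $\Diamond=\neg\square\neg$; open: $\square a=a$; locally closed: $a=\square b\wedge\Diamond c$; $M$ is $T_D$ if every element is a join of locally closed elements; $M$ is spatial if $a\mapsto\{x\text{ atom}: x\le a\}$ is injective. A proximity morphism $f:M\to N$ is a map with (P1) $f|_{\mathcal O M}:\mathcal O M\to\mathcal O N$ a frame morphism; (P2) $f(a\wedge b)=f(a)\wedge f(b)$; (P3) $f(\bigvee S)=\bigvee f[S]$ for finite $S\subseteq\mathcal{LC}M$; (P4) $f(a)=\bigvee\{f(x):x\in\mathcal{LC}M,x\le a\}$. $\mathbf{MT_P}$: MT-algebras with proximity morphisms, composition $(g\star f)(a)=\bigvee\{g(f(x)):x\in\mathcal{LC}M_1,x\le a\}$,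 identities $1_M(a)=\bigvee\{x\in\mathcal{LC}M:x\le a\}$. *)

theory Defs
  imports "HOL-Analysis.Analysis"
begin

section \<open>T_D spaces and the category Top_S\<close>

definition TD_space :: "'a topology \<Rightarrow> bool" where
  "TD_space X \<longleftrightarrow> (\<forall>x\<in>topspace X. \<exists>U. openin X U \<and> x \<in> U \<and> closedin (subtopology X U) {x})"

text \<open>Completely prime filters of the frame of opens of X (points of the soberification).\<close>
definition cp_filter :: "'a topology \<Rightarrow> 'a set set \<Rightarrow> bool" where
  "cp_filter X P \<longleftrightarrow>
     P \<subseteq> {U. openin X U} \<and>
     topspace X \<in> P \<and>
     (\<forall>U V. U \<in> P \<and> V \<in> P \<longrightarrow> U \<inter> V \<in> P) \<and>
     (\<forall>U V. U \<in> P \<and> openin X V \<and> U \<subseteq> V \<longrightarrow> V \<in> P) \<and>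
     (\<forall>\<U>. \<U> \<subseteq> {U. openin X U} \<and> \<Union>\<U> \<in> P \<longrightarrow> (\<exists>U\<in>\<U>. U \<in> P))"

definition sob_pts :: "'a topology \<Rightarrow> 'a set set set" where
  "sob_pts X = {P. cp_filter X P}"

text \<open>The soberification sX = pt(Omega X), with opens the sets {P. U \<in> P}, U open.\<close>
definition sob_top :: "'a topology \<Rightarrow> 'a set set topology" where
  "sob_top X = topology (\<lambda>W. \<exists>U. openin X U \<and> W = {P \<in> sob_pts X. U \<in> P})"

definition lam :: "'a topology \<Rightarrow> 'a \<Rightarrow> 'a set set" where
  "lam X x = {U. openin X U \<and> x \<in> U}"

definition s_map :: "'a topology \<Rightarrow> 'b topology \<Rightarrow> ('a \<Rightarrow> 'b) \<Rightarrow> 'a set set \<Rightarrow> 'b set set" where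
  "s_map X Y g p = {W. openin Y W \<and> {x \<in> topspace X. g x \<in> W} \<in> p}"

text \<open>Sober maps X \<leadsto> Y: continuous maps X \<rightarrow> sY (taken extensional on topspace X).\<close>
definition sober_hom :: "'a topology \<Rightarrow> 'b topology \<Rightarrow> ('a \<Rightarrow> 'b set set) set" where
  "sober_hom X Y = {f. continuous_map X (sob_top Y) f \<and> f \<in> extensional (topspace X)}"

definition sober_id :: "'a topology \<Rightarrow> 'a \<Rightarrow> 'a set set" where
  "sober_id X = restrict (lam X) (topspace X)"

definition sober_comp :: "'a topology \<Rightarrow> 'b topology \<Rightarrow> 'c topology \<Rightarrow>
    ('b \<Rightarrow> 'c set set) \<Rightarrow> ('a \<Rightarrow> 'b set set) \<Rightarrow> 'a \<Rightarrow> 'c set set" where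
  "sober_comp X Y Z g f =
     restrict (\<lambda>x. inv_into (topspace (sob_top Z)) (lam (sob_top Z))
                     (s_map Y (sob_top Z) g (f x))) (topspace X)"

section \<open>MT-algebras and the category MT_P\<close>

text \<open>An MT-algebra presented by a carrier set, its order, and the interior operator.\<close>
record 'b mt =
  mt_carrier :: "'b set"
  mt_le :: "'b \<Rightarrow> 'b \<Rightarrow> bool"
  mt_box :: "'b \<Rightarrow> 'b"

definition is_lub :: "'b mt \<Rightarrow> 'b set \<Rightarrow> 'b \<Rightarrow> bool" where
  "is_lub M S x \<longleftrightarrow> x \<in> mt_carrier M \<and> (\<forall>s\<in>S. mt_le M s x) \<and>
     (\<forall>y\<in>mt_carrier M. (\<forall>s\<in>S. mt_le M s y) \<longrightarrow> mt_le M x y)"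

definition is_glb :: "'b mt \<Rightarrow> 'b set \<Rightarrow> 'b \<Rightarrow> bool" where
  "is_glb M S x \<longleftrightarrow> x \<in> mt_carrier M \<and> (\<forall>s\<in>S. mt_le M x s) \<and>
     (\<forall>y\<in>mt_carrier M. (\<forall>s\<in>S. mt_le M y s) \<longrightarrow> mt_le M y x)"

definition mt_Join :: "'b mt \<Rightarrow> 'b set \<Rightarrow> 'b" where
  "mt_Join M S = (THE x. is_lub M S x)"

definition mt_Meet :: "'b mt \<Rightarrow> 'b set \<Rightarrow> 'b" where
  "mt_Meet M S = (THE x. is_glb M S x)"

definition mt_join :: "'b mt \<Rightarrow> 'b \<Rightarrow> 'b \<Rightarrow> 'b" where
  "mt_join M a b = mt_Join M {a, b}"

definition mt_meet :: "'b mt \<Rightarrow> 'b \<Rightarrow> 'b \<Rightarrow> 'b" where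
  "mt_meet M a b = mt_Meet M {a, b}"

definition mt_top :: "'b mt \<Rightarrow> 'b" where
  "mt_top M = mt_Join M (mt_carrier M)"

definition mt_bot :: "'b mt \<Rightarrow> 'b" where
  "mt_bot M = mt_Join M {}"

definition mt_neg :: "'b mt \<Rightarrow> 'b \<Rightarrow> 'b" where
  "mt_neg M a = (THE b. b \<in> mt_carrier M \<and> mt_join M a b = mt_top M \<and> mt_meet M a b = mt_bot M)"

definition complete_boolean :: "'b mt \<Rightarrow> bool" where
  "complete_boolean M \<longleftrightarrow>
     (\<forall>a\<in>mt_carrier M. mt_le M a a) \<and>
     (\<forall>a\<in>mt_carrier M. \<forall>b\<in>mt_carrier M. mt_le M a b \<and> mt_le M b a \<longrightarrow> a = b) \<and>
     (\<forall>a\<in>mt_carrier M. \<forall>b\<in>mt_carrier M. \<forall>c\<in>mt_carrier M.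
        mt_le M a b \<and> mt_le M b c \<longrightarrow> mt_le M a c) \<and>
     (\<forall>S. S \<subseteq> mt_carrier M \<longrightarrow> (\<exists>x. is_lub M S x)) \<and>
     (\<forall>a\<in>mt_carrier M. \<forall>b\<in>mt_carrier M. \<forall>c\<in>mt_carrier M.
        mt_meet M a (mt_join M b c) = mt_join M (mt_meet M a b) (mt_meet M a c)) \<and>
     (\<forall>a\<in>mt_carrier M. \<exists>b\<in>mt_carrier M.
        mt_join M a b = mt_top M \<and> mt_meet M a b = mt_bot M)"

definition MT_algebra :: "'b mt \<Rightarrow> bool" where
  "MT_algebra M \<longleftrightarrow> complete_boolean M \<and>
     (\<forall>a\<in>mt_carrier M. mt_box M a \<in> mt_carrier M) \<and>
     mt_box M (mt_top M) = mt_top M \<and>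
     (\<forall>a\<in>mt_carrier M. \<forall>b\<in>mt_carrier M.
        mt_box M (mt_meet M a b) = mt_meet M (mt_box M a) (mt_box M b)) \<and>
     (\<forall>a\<in>mt_carrier M. mt_le M (mt_box M a) a) \<and>
     (\<forall>a\<in>mt_carrier M. mt_le M (mt_box M a) (mt_box M (mt_box M a)))"

definition mt_dia :: "'b mt \<Rightarrow> 'b \<Rightarrow> 'b" where
  "mt_dia M a = mt_neg M (mt_box M (mt_neg M a))"

definition mt_opens :: "'b mt \<Rightarrow> 'b set" where
  "mt_opens M = {a \<in> mt_carrier M. mt_box M a = a}"

definition mt_lc :: "'b mt \<Rightarrow> 'b set" where
  "mt_lc M = {a \<in> mt_carrier M. \<exists>b\<in>mt_carrier M. \<exists>c\<in>mt_carrier M.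
                 a = mt_meet M (mt_box M b) (mt_dia M c)}"

definition TD_algebra :: "'b mt \<Rightarrow> bool" where
  "TD_algebra M \<longleftrightarrow> (\<forall>a\<in>mt_carrier M. \<exists>S. S \<subseteq> mt_lc M \<and> a = mt_Join M S)"

definition mt_atoms :: "'b mt \<Rightarrow> 'b set" where
  "mt_atoms M = {x \<in> mt_carrier M. x \<noteq> mt_bot M \<and>
      (\<forall>y\<in>mt_carrier M. mt_le M y x \<longrightarrow> y = mt_bot M \<or> y = x)}"

definition atoms_below :: "'b mt \<Rightarrow> 'b \<Rightarrow> 'b set" where
  "atoms_below M a = {x \<in> mt_atoms M. mt_le M x a}"

definition spatial :: "'b mt \<Rightarrow> bool" where
  "spatial M \<longleftrightarrow> inj_on (atoms_below M) (mt_carrier M)"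

definition STDMT :: "'b mt \<Rightarrow> bool" where
  "STDMT M \<longleftrightarrow> MT_algebra M \<and> TD_algebra M \<and> spatial M"

definition proximity :: "'b mt \<Rightarrow> 'c mt \<Rightarrow> ('b \<Rightarrow> 'c) \<Rightarrow> bool" where
  "proximity M N f \<longleftrightarrow>
     f \<in> mt_carrier M \<rightarrow> mt_carrier N \<and>
     \<comment> \<open>(P1) restriction to opens is a frame morphism O M \<rightarrow> O N\<close>
     (\<forall>a\<in>mt_opens M. f a \<in> mt_opens N) \<and>
     f (mt_top M) = mt_top N \<and>
     (\<forall>a\<in>mt_opens M. \<forall>b\<in>mt_opens M. f (mt_meet M a b) = mt_meet N (f a) (f b)) \<and>
     (\<forall>S. S \<subseteq> mt_opens M \<longrightarrow> f (mt_Join M S) = mt_Join N (f ` S)) \<and>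
     \<comment> \<open>(P2)\<close>
     (\<forall>a\<in>mt_carrier M. \<forall>b\<in>mt_carrier M. f (mt_meet M a b) = mt_meet N (f a) (f b)) \<and>
     \<comment> \<open>(P3)\<close>
     (\<forall>S. finite S \<and> S \<subseteq> mt_lc M \<longrightarrow> f (mt_Join M S) = mt_Join N (f ` S)) \<and>
     \<comment> \<open>(P4)\<close>
     (\<forall>a\<in>mt_carrier M. f a = mt_Join N {f x | x. x \<in> mt_lc M \<and> mt_le M x a})"

definition prox_hom :: "'b mt \<Rightarrow> 'c mt \<Rightarrow> ('b \<Rightarrow> 'c) set" where
  "prox_hom M N = {f. proximity M N f \<and> f \<in> extensional (mt_carrier M)}"

definition prox_id :: "'b mt \<Rightarrow> 'b \<Rightarrow> 'b" where
  "prox_id M = restrict (\<lambda>a. mt_Join M {x \<in> mt_lc M. mt_le M x a}) (mt_carrier M)"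

definition prox_comp :: "'b mt \<Rightarrow> 'd mt \<Rightarrow> ('c \<Rightarrow> 'd) \<Rightarrow> ('b \<Rightarrow> 'c) \<Rightarrow> 'b \<Rightarrow> 'd" where
  "prox_comp M1 M3 g f =
     restrict (\<lambda>a. mt_Join M3 {g (f x) | x. x \<in> mt_lc M1 \<and> mt_le M1 x a}) (mt_carrier M1)"

section \<open>The atom-space functor STDMT_P^op \<rightarrow> T_D Top_S\<close>

definition at_space :: "'b mt \<Rightarrow> 'b topology" where
  "at_space M = topology (\<lambda>W. \<exists>u\<in>mt_opens M. W = atoms_below M u)"

definition at_map :: "'b mt \<Rightarrow> 'c mt \<Rightarrow> ('b \<Rightarrow> 'c) \<Rightarrow> 'c \<Rightarrow> 'b set set" where
  "at_map M N f = restrict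
     (\<lambda>y. {W. \<exists>u\<in>mt_opens M. W = atoms_below M u \<and> mt_le N y (f u)}) (mt_atoms N)"

end

theory Submission
  imports Defs
begin

text \<open>In a spatial MT-algebra \<open>M\<close> every element is determined by the set of atoms below it, so
  \<open>M\<close> sits inside the powerset of its atom space, opens going to opens and locally closed
  elements to locally closed sets \<open>U - V\<close>. A sober map \<open>at N \<leadsto> at M\<close> is the same thing as a
  frame homomorphism from the opens of \<open>at M\<close> to those of \<open>at N\<close>, and a proximity morphism
  \<open>f\<close> induces one by sending the atoms below an open \<open>u\<close> to the atoms below \<open>f u\<close>; the
  functor laws are checked on these frame homomorphisms. Conversely, a frame homomorphism
  \<open>\<phi>\<close> extends to locally closed sets by \<open>U - V \<mapsto> \<phi> U - \<phi> V\<close>, and, since in a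
  \<open>T\<^sub>D\<close>-algebra every element is a join of locally closed ones, to a proximity
  morphism; as (P2)--(P4) make a proximity morphism determined by its values on opens, the
  functor is fully faithful. Finally, a \<open>T\<^sub>D\<close> space is isomorphic to the atom space of its
  powerset algebra, which is a spatial \<open>T\<^sub>D\<close>-algebra precisely because points are locally
  closed.\<close>

section \<open>Complete Boolean algebras\<close>

locale mt_boolean =
  fixes M :: "'b mt"
  assumes complete_boolean: "complete_boolean M"
begin

abbreviation "C \<equiv> mt_carrier M"

lemma le_refl: "a \<in> C \<Longrightarrow> mt_le M a a"
  using complete_boolean unfolding complete_boolean_def by blast

lemma le_antisym: "a \<in> C \<Longrightarrow> b \<in> C \<Longrightarrow> mt_le M a b \<Longrightarrow> mt_le M b a \<Longrightarrow> a = b"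
  using complete_boolean unfolding complete_boolean_def by blast

lemma le_trans: "a \<in> C \<Longrightarrow> b \<in> C \<Longrightarrow> c \<in> C \<Longrightarrow> mt_le M a b \<Longrightarrow> mt_le M b c \<Longrightarrow> mt_le M a c"
  using complete_boolean unfolding complete_boolean_def by blast

lemma lub_exists: "S \<subseteq> C \<Longrightarrow> \<exists>x. is_lub M S x"
  using complete_boolean unfolding complete_boolean_def by blast

lemma meet_join_distrib: "a \<in> C \<Longrightarrow> b \<in> C \<Longrightarrow> c \<in> C \<Longrightarrow>
    mt_meet M a (mt_join M b c) = mt_join M (mt_meet M a b) (mt_meet M a c)"
  using complete_boolean unfolding complete_boolean_def by blast

lemma complement_exists: "a \<in> C \<Longrightarrow> \<exists>b\<in>C. mt_join M a b = mt_top M \<and> mt_meet M a b = mt_bot M"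
  using complete_boolean unfolding complete_boolean_def by blast

lemma lub_unique: "is_lub M S x \<Longrightarrow> is_lub M S y \<Longrightarrow> x = y"
  unfolding is_lub_def by (meson le_antisym)

lemma glb_unique: "is_glb M S x \<Longrightarrow> is_glb M S y \<Longrightarrow> x = y"
  unfolding is_glb_def by (meson le_antisym)

lemma is_lub_Join: "S \<subseteq> C \<Longrightarrow> is_lub M S (mt_Join M S)"
  unfolding mt_Join_def by (metis lub_exists lub_unique theI)

lemma Join_in: "S \<subseteq> C \<Longrightarrow> mt_Join M S \<in> C"
  using is_lub_Join unfolding is_lub_def by blast

lemma Join_upper: "S \<subseteq> C \<Longrightarrow> s \<in> S \<Longrightarrow> mt_le M s (mt_Join M S)"
  using is_lub_Join unfolding is_lub_def by blast

lemma Join_least: "S \<subseteq> C \<Longrightarrow> y \<in> C \<Longrightarrow> (\<And>s. s \<in> S \<Longrightarrow> mt_le M s y) \<Longrightarrow> mt_le M (mt_Join M S) y"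
  using is_lub_Join unfolding is_lub_def by blast

lemma Join_eq_greatest: "S \<subseteq> C \<Longrightarrow> m \<in> S \<Longrightarrow> (\<And>s. s \<in> S \<Longrightarrow> mt_le M s m) \<Longrightarrow> mt_Join M S = m"
  using le_antisym Join_in Join_upper Join_least by (meson subsetD)

lemma is_glb_Join_lower_bounds: "S \<subseteq> C \<Longrightarrow> is_glb M S (mt_Join M {y\<in>C. \<forall>s\<in>S. mt_le M y s})"
  unfolding is_glb_def using Join_in Join_least Join_upper
  by (smt (verit, best) mem_Collect_eq subsetD subsetI)

lemma is_glb_Meet: "S \<subseteq> C \<Longrightarrow> is_glb M S (mt_Meet M S)"
  unfolding mt_Meet_def by (metis is_glb_Join_lower_bounds glb_unique theI)

lemma meet_in: "a \<in> C \<Longrightarrow> b \<in> C \<Longrightarrow> mt_meet M a b \<in> C"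
  using is_glb_Meet[of "{a,b}"] unfolding mt_meet_def is_glb_def by blast

lemma meet_le1: "a \<in> C \<Longrightarrow> b \<in> C \<Longrightarrow> mt_le M (mt_meet M a b) a"
  using is_glb_Meet[of "{a,b}"] unfolding mt_meet_def is_glb_def by blast

lemma meet_le2: "a \<in> C \<Longrightarrow> b \<in> C \<Longrightarrow> mt_le M (mt_meet M a b) b"
  using is_glb_Meet[of "{a,b}"] unfolding mt_meet_def is_glb_def by blast

lemma meet_greatest:
  "a \<in> C \<Longrightarrow> b \<in> C \<Longrightarrow> y \<in> C \<Longrightarrow> mt_le M y a \<Longrightarrow> mt_le M y b \<Longrightarrow> mt_le M y (mt_meet M a b)"
  using is_glb_Meet[of "{a,b}"] unfolding mt_meet_def is_glb_def by blast

lemma le_meet_iff: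
  "x \<in> C \<Longrightarrow> a \<in> C \<Longrightarrow> b \<in> C \<Longrightarrow> mt_le M x (mt_meet M a b) \<longleftrightarrow> mt_le M x a \<and> mt_le M x b"
  by (meson le_trans meet_greatest meet_in meet_le1 meet_le2)

lemma meet_commute: "mt_meet M a b = mt_meet M b a"
  unfolding mt_meet_def by (simp add: insert_commute)

lemma meet_absorb: "a \<in> C \<Longrightarrow> b \<in> C \<Longrightarrow> mt_le M a b \<Longrightarrow> mt_meet M a b = a"
  by (meson le_antisym le_refl meet_greatest meet_in meet_le1)

lemma le_iff_meet: "a \<in> C \<Longrightarrow> b \<in> C \<Longrightarrow> mt_le M a b \<longleftrightarrow> mt_meet M a b = a"
  by (metis meet_absorb meet_le2)

lemma join_in: "a \<in> C \<Longrightarrow> b \<in> C \<Longrightarrow> mt_join M a b \<in> C"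
  unfolding mt_join_def by (intro Join_in) auto

lemma join_ge2: "a \<in> C \<Longrightarrow> b \<in> C \<Longrightarrow> mt_le M b (mt_join M a b)"
  unfolding mt_join_def by (intro Join_upper) auto

lemma join_least: "a \<in> C \<Longrightarrow> b \<in> C \<Longrightarrow> y \<in> C \<Longrightarrow> mt_le M a y \<Longrightarrow> mt_le M b y \<Longrightarrow> mt_le M (mt_join M a b) y"
  unfolding mt_join_def by (intro Join_least) auto

lemma join_absorb: "a \<in> C \<Longrightarrow> b \<in> C \<Longrightarrow> mt_le M a b \<Longrightarrow> mt_join M a b = b"
  by (meson join_ge2 join_in join_least le_antisym le_refl)

lemma top_in: "mt_top M \<in> C"
  unfolding mt_top_def by (rule Join_in) auto

lemma le_top: "a \<in> C \<Longrightarrow> mt_le M a (mt_top M)"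
  unfolding mt_top_def by (rule Join_upper) auto

lemma bot_in: "mt_bot M \<in> C"
  unfolding mt_bot_def by (rule Join_in) auto

lemma bot_le: "a \<in> C \<Longrightarrow> mt_le M (mt_bot M) a"
  unfolding mt_bot_def by (rule Join_least) auto

lemma meet_top: "a \<in> C \<Longrightarrow> mt_meet M a (mt_top M) = a"
  by (simp add: le_top meet_absorb top_in)

lemma join_bot: "a \<in> C \<Longrightarrow> mt_join M (mt_bot M) a = a"
  by (simp add: bot_in bot_le join_absorb)

lemma le_complement:
  assumes a: "a \<in> C" and b: "b \<in> C" and c: "c \<in> C"
    and ac: "mt_join M a c = mt_top M" and ab: "mt_meet M b a = mt_bot M"
  shows "mt_le M b c"
proof -
  have "b = mt_meet M b (mt_join M a c)" using ac b by (simp add: meet_top)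
  also have "\<dots> = mt_join M (mt_meet M b a) (mt_meet M b c)" using meet_join_distrib a b c by blast
  also have "\<dots> = mt_meet M b c" using ab by (simp add: b c join_bot meet_in)
  finally have "mt_meet M b c = b" by simp
  then show ?thesis using le_iff_meet[OF b c] by blast
qed

lemma complement_unique:
  assumes "a \<in> C" "b \<in> C" "c \<in> C"
    and "mt_join M a b = mt_top M" "mt_meet M a b = mt_bot M"
    and "mt_join M a c = mt_top M" "mt_meet M a c = mt_bot M"
  shows "b = c"
proof (rule le_antisym)
  show "mt_le M b c" using assms le_complement[of a b c] meet_commute[of b a] by simp
  show "mt_le M c b" using assms le_complement[of a c b] meet_commute[of c a] by simp
qed (use assms in auto)

lemma neg_complement:
  assumes a: "a \<in> C"
  shows "mt_neg M a \<in> C \<and> mt_join M a (mt_neg M a) = mt_top M \<and> mt_meet M a (mt_neg M a) = mt_bot M"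
proof -
  obtain b where b: "b \<in> C" "mt_join M a b = mt_top M" "mt_meet M a b = mt_bot M"
    using complement_exists a by blast
  show ?thesis unfolding mt_neg_def
    by (rule theI[of _ b]) (use b complement_unique[OF a] in blast)+
qed

lemma neg_in: "a \<in> C \<Longrightarrow> mt_neg M a \<in> C"
  using neg_complement by blast

lemma join_neg: "a \<in> C \<Longrightarrow> mt_join M a (mt_neg M a) = mt_top M"
  using neg_complement by blast

lemma meet_neg: "a \<in> C \<Longrightarrow> mt_meet M a (mt_neg M a) = mt_bot M"
  using neg_complement by blast

lemma neg_neg: assumes a: "a \<in> C" shows "mt_neg M (mt_neg M a) = a"
proof -
  have "mt_join M (mt_neg M a) a = mt_top M"
    using join_neg[OF a] unfolding mt_join_def by (simp add: insert_commute)
  then show ?thesis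
    using complement_unique[OF neg_in[OF a] neg_in[OF neg_in[OF a]] a]
      join_neg[OF neg_in[OF a]] meet_neg[OF neg_in[OF a]] meet_neg[OF a] meet_commute by metis
qed

lemma atom_in: "x \<in> mt_atoms M \<Longrightarrow> x \<in> C"
  unfolding mt_atoms_def by blast

lemma atom_le_or_disjoint:
  assumes x: "x \<in> mt_atoms M" and s: "s \<in> C"
  shows "mt_meet M x s = mt_bot M \<or> mt_le M x s"
proof -
  have "mt_meet M x s = mt_bot M \<or> mt_meet M x s = x"
    using x meet_in[OF atom_in[OF x] s] meet_le1[OF atom_in[OF x] s] unfolding mt_atoms_def by blast
  then show ?thesis using meet_le2[OF atom_in[OF x] s] by metis
qed

lemma atom_le_Join:
  assumes x: "x \<in> mt_atoms M" and S: "S \<subseteq> C" and le: "mt_le M x (mt_Join M S)"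
  shows "\<exists>s\<in>S. mt_le M x s"
proof (rule ccontr)
  assume none: "\<not> ?thesis"
  have xC: "x \<in> C" using atom_in x by blast
  have "mt_le M s (mt_neg M x)" if s: "s \<in> S" for s
  proof -
    have "mt_meet M x s = mt_bot M" using atom_le_or_disjoint[OF x] S s none by blast
    then have "mt_meet M s x = mt_bot M" by (simp add: meet_commute)
    then show ?thesis using le_complement[OF xC _ neg_in[OF xC] join_neg[OF xC]] S s by blast
  qed
  then have "mt_le M (mt_Join M S) (mt_neg M x)"
    using Join_least S neg_in xC by blast
  then have "mt_le M x (mt_neg M x)"
    using le_trans[OF xC Join_in[OF S] neg_in[OF xC] le] by blast
  then have "x = mt_bot M" using meet_absorb[OF xC neg_in[OF xC]] meet_neg[OF xC] by simp
  then show False using x unfolding mt_atoms_def by blast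
qed

end

section \<open>Sober maps as frame homomorphisms\<close>

definition frame_hom :: "'a topology \<Rightarrow> 'b topology \<Rightarrow> ('b set \<Rightarrow> 'a set) \<Rightarrow> bool" where
  "frame_hom X Y \<phi> \<longleftrightarrow> (\<forall>V. openin Y V \<longrightarrow> openin X (\<phi> V)) \<and> \<phi> (topspace Y) = topspace X \<and>
     (\<forall>U V. openin Y U \<longrightarrow> openin Y V \<longrightarrow> \<phi> (U \<inter> V) = \<phi> U \<inter> \<phi> V) \<and>
     (\<forall>\<U>. (\<forall>U\<in>\<U>. openin Y U) \<longrightarrow> \<phi> (\<Union>\<U>) = \<Union>(\<phi> ` \<U>))"

definition pt_map :: "'a topology \<Rightarrow> 'b topology \<Rightarrow> ('b set \<Rightarrow> 'a set) \<Rightarrow> 'a \<Rightarrow> 'b set set" where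
  "pt_map X Y \<phi> = restrict (\<lambda>x. {V. openin Y V \<and> x \<in> \<phi> V}) (topspace X)"

definition frame_of_sober :: "'a topology \<Rightarrow> ('a \<Rightarrow> 'b set set) \<Rightarrow> 'b set \<Rightarrow> 'a set" where
  "frame_of_sober X h V = {x \<in> topspace X. V \<in> h x}"

lemma cp_filter_openin: "cp_filter X P \<Longrightarrow> U \<in> P \<Longrightarrow> openin X U"
  unfolding cp_filter_def by blast

lemma cp_filter_topspace: "cp_filter X P \<Longrightarrow> topspace X \<in> P"
  unfolding cp_filter_def by blast

lemma cp_filter_Int_iff:
  "cp_filter X P \<Longrightarrow> openin X U \<Longrightarrow> openin X V \<Longrightarrow> U \<inter> V \<in> P \<longleftrightarrow> U \<in> P \<and> V \<in> P"
  unfolding cp_filter_def by (meson inf_le1 inf_le2 openin_Int)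

lemma cp_filter_Union_iff:
  assumes P: "cp_filter X P" and \<U>: "\<U> \<subseteq> {U. openin X U}"
  shows "\<Union>\<U> \<in> P \<longleftrightarrow> (\<exists>U\<in>\<U>. U \<in> P)"
proof
  show "\<Union>\<U> \<in> P \<Longrightarrow> \<exists>U\<in>\<U>. U \<in> P" using P \<U> unfolding cp_filter_def by blast
  have "openin X (\<Union>\<U>)" using \<U> by (intro openin_Union) blast
  then show "\<exists>U\<in>\<U>. U \<in> P \<Longrightarrow> \<Union>\<U> \<in> P" using P unfolding cp_filter_def by (meson Sup_upper)
qed

lemma istopology_sob_top: "istopology (\<lambda>W. \<exists>U. openin X U \<and> W = {P \<in> sob_pts X. U \<in> P})"
  unfolding istopology_def
proof (intro conjI allI impI)
  fix S T
  assume "\<exists>U. openin X U \<and> S = {P \<in> sob_pts X. U \<in> P}" "\<exists>U. openin X U \<and> T = {P \<in> sob_pts X. U \<in> P}"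
  then obtain U V where "openin X U" "S = {P \<in> sob_pts X. U \<in> P}" "openin X V" "T = {P \<in> sob_pts X. V \<in> P}"
    by blast
  moreover from this have "S \<inter> T = {P \<in> sob_pts X. U \<inter> V \<in> P}"
    using cp_filter_Int_iff unfolding sob_pts_def by auto
  ultimately show "\<exists>U. openin X U \<and> S \<inter> T = {P \<in> sob_pts X. U \<in> P}" by blast
next
  fix K
  assume K: "\<forall>W\<in>K. \<exists>U. openin X U \<and> W = {P \<in> sob_pts X. U \<in> P}"
  define \<U> where "\<U> = {U. openin X U \<and> {P \<in> sob_pts X. U \<in> P} \<in> K}"
  have \<U>_open: "\<U> \<subseteq> {U. openin X U}" unfolding \<U>_def by blast
  have "\<Union>K = {P \<in> sob_pts X. \<Union>\<U> \<in> P}"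
  proof (intro set_eqI iffI)
    fix P assume "P \<in> \<Union>K"
    then obtain W where W: "W \<in> K" "P \<in> W" by blast
    then obtain U where "openin X U" "W = {P \<in> sob_pts X. U \<in> P}" using K by blast
    then show "P \<in> {P \<in> sob_pts X. \<Union>\<U> \<in> P}"
      using W cp_filter_Union_iff[OF _ \<U>_open, of P] unfolding \<U>_def sob_pts_def by auto
  next
    fix P assume "P \<in> {P \<in> sob_pts X. \<Union>\<U> \<in> P}"
    then obtain U where "U \<in> \<U>" "U \<in> P" "P \<in> sob_pts X"
      using cp_filter_Union_iff[OF _ \<U>_open, of P] unfolding sob_pts_def by auto
    then show "P \<in> \<Union>K" unfolding \<U>_def by blast
  qed
  moreover have "openin X (\<Union>\<U>)" using \<U>_open by (intro openin_Union) blast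
  ultimately show "\<exists>U. openin X U \<and> \<Union>K = {P \<in> sob_pts X. U \<in> P}" by blast
qed

lemma openin_sob_top: "openin (sob_top X) W \<longleftrightarrow> (\<exists>U. openin X U \<and> W = {P \<in> sob_pts X. U \<in> P})"
  unfolding sob_top_def topology_inverse'[OF istopology_sob_top] by (rule refl)

lemma topspace_sob_top: "topspace (sob_top X) = sob_pts X"
proof -
  have "{P \<in> sob_pts X. topspace X \<in> P} = sob_pts X"
    unfolding sob_pts_def using cp_filter_topspace by blast
  then have "openin (sob_top X) (sob_pts X)" using openin_sob_top by (metis openin_topspace)
  moreover have "\<And>W. openin (sob_top X) W \<Longrightarrow> W \<subseteq> sob_pts X" using openin_sob_top by blast
  ultimately show ?thesis unfolding topspace_def by blast
qed

lemma inj_on_lam_sob_top: "inj_on (lam (sob_top X)) (topspace (sob_top X))"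
proof (rule inj_onI)
  fix P Q
  assume P: "P \<in> topspace (sob_top X)" and Q: "Q \<in> topspace (sob_top X)"
    and eq: "lam (sob_top X) P = lam (sob_top X) Q"
  have "U \<in> P \<longleftrightarrow> U \<in> Q" if U: "openin X U" for U
  proof -
    have "openin (sob_top X) {R \<in> sob_pts X. U \<in> R}" using openin_sob_top U by blast
    then have "P \<in> {R \<in> sob_pts X. U \<in> R} \<longleftrightarrow> Q \<in> {R \<in> sob_pts X. U \<in> R}"
      using eq unfolding lam_def by (metis (no_types, lifting) mem_Collect_eq)
    then show ?thesis using P Q topspace_sob_top by auto
  qed
  moreover have "cp_filter X P" "cp_filter X Q" using P Q unfolding topspace_sob_top sob_pts_def by auto
  ultimately show "P = Q" using cp_filter_openin by blast
qed

lemma frame_homD: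
  assumes "frame_hom X Y \<phi>"
  shows "openin Y V \<Longrightarrow> openin X (\<phi> V)"
    and "\<phi> (topspace Y) = topspace X"
    and "openin Y U \<Longrightarrow> openin Y V \<Longrightarrow> \<phi> (U \<inter> V) = \<phi> U \<inter> \<phi> V"
    and "(\<And>U. U \<in> \<U> \<Longrightarrow> openin Y U) \<Longrightarrow> \<phi> (\<Union>\<U>) = \<Union>(\<phi> ` \<U>)"
  using assms unfolding frame_hom_def by simp_all

lemma frame_hom_subset: "frame_hom X Y \<phi> \<Longrightarrow> openin Y V \<Longrightarrow> \<phi> V \<subseteq> topspace X"
  using frame_homD(1) openin_subset by blast

lemma frame_hom_Un:
  assumes "frame_hom X Y \<phi>" "openin Y U" "openin Y V"
  shows "\<phi> (U \<union> V) = \<phi> U \<union> \<phi> V"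
proof -
  have "\<And>W. W \<in> {U, V} \<Longrightarrow> openin Y W" using assms(2,3) by blast
  then have "\<phi> (\<Union>{U, V}) = \<Union>(\<phi> ` {U, V})" by (rule frame_homD(4)[OF assms(1)])
  then show ?thesis by simp
qed

lemma frame_hom_mono:
  assumes "frame_hom X Y \<phi>" "openin Y U" "openin Y V" "U \<subseteq> V"
  shows "\<phi> U \<subseteq> \<phi> V"
  using frame_hom_Un[OF assms(1-3)] assms(4) by (metis Un_absorb1 Un_upper1)

lemma frame_hom_empty: "frame_hom X Y \<phi> \<Longrightarrow> \<phi> {} = {}"
  using frame_homD(4)[of X Y \<phi> "{}"] by simp

lemma frame_hom_comp:
  assumes \<phi>: "frame_hom X Y \<phi>" and \<psi>: "frame_hom Y Z \<psi>"
  shows "frame_hom X Z (\<phi> \<circ> \<psi>)"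
  unfolding frame_hom_def comp_def
proof (intro conjI allI impI)
  fix \<U> assume "\<forall>U\<in>\<U>. openin Z U"
  then have "\<phi> (\<psi> (\<Union>\<U>)) = \<Union>(\<phi> ` \<psi> ` \<U>)"
    using frame_homD(1,4)[OF \<psi>] frame_homD(4)[OF \<phi>, of "\<psi> ` \<U>"] by auto
  then show "\<phi> (\<psi> (\<Union>\<U>)) = \<Union>((\<lambda>U. \<phi> (\<psi> U)) ` \<U>)" by (simp add: image_image)
qed (use frame_homD[OF \<phi>] frame_homD[OF \<psi>] in simp_all)

lemma cp_filter_frame_hom_point:
  assumes \<phi>: "frame_hom X Y \<phi>" and x: "x \<in> topspace X"
  shows "cp_filter Y {V. openin Y V \<and> x \<in> \<phi> V}"
  unfolding cp_filter_def
proof (intro conjI allI impI)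
  show "topspace Y \<in> {V. openin Y V \<and> x \<in> \<phi> V}" using x frame_homD(2)[OF \<phi>] by simp
  fix \<U> assume "\<U> \<subseteq> {U. openin Y U} \<and> \<Union>\<U> \<in> {V. openin Y V \<and> x \<in> \<phi> V}"
  then show "\<exists>U\<in>\<U>. U \<in> {V. openin Y V \<and> x \<in> \<phi> V}" using frame_homD(4)[OF \<phi>, of \<U>] by auto
next
  fix U V assume "U \<in> {V. openin Y V \<and> x \<in> \<phi> V} \<and> openin Y V \<and> U \<subseteq> V"
  then show "V \<in> {V. openin Y V \<and> x \<in> \<phi> V}" using frame_hom_mono[OF \<phi>, of U V] by blast
qed (use frame_homD(3)[OF \<phi>] in auto)

lemma pt_map_in_sob_pts: "frame_hom X Y \<phi> \<Longrightarrow> x \<in> topspace X \<Longrightarrow> pt_map X Y \<phi> x \<in> sob_pts Y"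
  unfolding pt_map_def sob_pts_def using cp_filter_frame_hom_point by auto

lemma pt_map_preimage:
  "frame_hom X Y \<phi> \<Longrightarrow> openin Y U \<Longrightarrow>
     {x \<in> topspace X. pt_map X Y \<phi> x \<in> {P \<in> sob_pts Y. U \<in> P}} = \<phi> U"
  using pt_map_in_sob_pts frame_hom_subset unfolding pt_map_def by fastforce

lemma pt_map_in_sober_hom:
  assumes \<phi>: "frame_hom X Y \<phi>"
  shows "pt_map X Y \<phi> \<in> sober_hom X Y"
proof -
  have "continuous_map X (sob_top Y) (pt_map X Y \<phi>)"
    unfolding continuous_map_def topspace_sob_top
    using pt_map_in_sob_pts[OF \<phi>] pt_map_preimage[OF \<phi>] frame_homD(1)[OF \<phi>]
    by (auto simp: openin_sob_top)
  then show ?thesis unfolding sober_hom_def by (simp add: pt_map_def)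
qed

lemma sober_hom_cp_filter: "h \<in> sober_hom X Y \<Longrightarrow> x \<in> topspace X \<Longrightarrow> cp_filter Y (h x)"
  unfolding sober_hom_def continuous_map_def topspace_sob_top sob_pts_def by blast

lemma frame_hom_frame_of_sober:
  assumes h: "h \<in> sober_hom X Y"
  shows "frame_hom X Y (frame_of_sober X h)"
  unfolding frame_hom_def
proof (intro conjI allI impI)
  fix V assume "openin Y V"
  then have "openin X {x \<in> topspace X. h x \<in> {P \<in> sob_pts Y. V \<in> P}}"
    using h unfolding sober_hom_def continuous_map_def openin_sob_top by blast
  moreover have "{x \<in> topspace X. h x \<in> {P \<in> sob_pts Y. V \<in> P}} = frame_of_sober X h V"
    unfolding frame_of_sober_def sob_pts_def using sober_hom_cp_filter[OF h] by auto
  ultimately show "openin X (frame_of_sober X h V)" by simp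
next
  show "frame_of_sober X h (topspace Y) = topspace X"
    unfolding frame_of_sober_def using sober_hom_cp_filter[OF h] cp_filter_topspace by blast
next
  fix U V assume "openin Y U" "openin Y V"
  then show "frame_of_sober X h (U \<inter> V) = frame_of_sober X h U \<inter> frame_of_sober X h V"
    unfolding frame_of_sober_def using sober_hom_cp_filter[OF h] cp_filter_Int_iff by blast
next
  fix \<U> assume "\<forall>U\<in>\<U>. openin Y U"
  then have "\<U> \<subseteq> {U. openin Y U}" by blast
  then show "frame_of_sober X h (\<Union>\<U>) = \<Union>(frame_of_sober X h ` \<U>)"
    unfolding frame_of_sober_def using sober_hom_cp_filter[OF h] cp_filter_Union_iff by blast
qed

lemma pt_map_frame_of_sober:
  assumes h: "h \<in> sober_hom X Y"
  shows "pt_map X Y (frame_of_sober X h) = h"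
proof
  fix x
  show "pt_map X Y (frame_of_sober X h) x = h x"
  proof (cases "x \<in> topspace X")
    case True
    then show ?thesis
      unfolding pt_map_def frame_of_sober_def using sober_hom_cp_filter[OF h True] cp_filter_openin by auto
  next
    case False
    then show ?thesis using h unfolding pt_map_def sober_hom_def extensional_def by auto
  qed
qed

lemma pt_map_cong: "(\<And>V. openin Y V \<Longrightarrow> \<phi> V = \<psi> V) \<Longrightarrow> pt_map X Y \<phi> = pt_map X Y \<psi>"
  unfolding pt_map_def by (intro restrict_ext) auto

lemma pt_map_eqD:
  assumes "frame_hom X Y \<phi>" "frame_hom X Y \<psi>" "pt_map X Y \<phi> = pt_map X Y \<psi>" "openin Y V"
  shows "\<phi> V = \<psi> V"
proof -
  have "x \<in> \<phi> V \<longleftrightarrow> x \<in> \<psi> V" if "x \<in> topspace X" for x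
    using fun_cong[OF assms(3), of x] that assms(4) unfolding pt_map_def by auto
  then show ?thesis using frame_hom_subset[OF assms(1,4)] frame_hom_subset[OF assms(2,4)] by blast
qed

lemma sober_id_eq_pt_map: "sober_id X = pt_map X X (\<lambda>V. V)"
  unfolding sober_id_def pt_map_def lam_def by simp

lemma s_map_pt_map:
  assumes \<phi>: "frame_hom X Y \<phi>" and \<psi>: "frame_hom Y Z \<psi>" and x: "x \<in> topspace X"
  shows "s_map Y (sob_top Z) (pt_map Y Z \<psi>) (pt_map X Y \<phi> x) = lam (sob_top Z) (pt_map X Z (\<phi> \<circ> \<psi>) x)"
proof (rule set_eqI)
  fix W
  show "W \<in> s_map Y (sob_top Z) (pt_map Y Z \<psi>) (pt_map X Y \<phi> x) \<longleftrightarrow>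
      W \<in> lam (sob_top Z) (pt_map X Z (\<phi> \<circ> \<psi>) x)"
  proof (cases "openin (sob_top Z) W")
    case True
    then obtain U where U: "openin Z U" "W = {P \<in> sob_pts Z. U \<in> P}" unfolding openin_sob_top by blast
    have "W \<in> s_map Y (sob_top Z) (pt_map Y Z \<psi>) (pt_map X Y \<phi> x) \<longleftrightarrow> \<psi> U \<in> pt_map X Y \<phi> x"
      unfolding s_map_def using True pt_map_preimage[OF \<psi> U(1)] U(2) by simp
    also have "\<dots> \<longleftrightarrow> x \<in> \<phi> (\<psi> U)"
      using x frame_homD(1)[OF \<psi> U(1)] by (simp add: pt_map_def)
    also have "\<dots> \<longleftrightarrow> pt_map X Z (\<phi> \<circ> \<psi>) x \<in> W"
      using U pt_map_in_sob_pts[OF frame_hom_comp[OF \<phi> \<psi>] x] x by (simp add: pt_map_def)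
    also have "\<dots> \<longleftrightarrow> W \<in> lam (sob_top Z) (pt_map X Z (\<phi> \<circ> \<psi>) x)"
      unfolding lam_def using True by simp
    finally show ?thesis .
  qed (simp add: s_map_def lam_def)
qed

lemma sober_comp_pt_map:
  assumes \<phi>: "frame_hom X Y \<phi>" and \<psi>: "frame_hom Y Z \<psi>"
  shows "sober_comp X Y Z (pt_map Y Z \<psi>) (pt_map X Y \<phi>) = pt_map X Z (\<phi> \<circ> \<psi>)"
proof
  fix x
  show "sober_comp X Y Z (pt_map Y Z \<psi>) (pt_map X Y \<phi>) x = pt_map X Z (\<phi> \<circ> \<psi>) x"
  proof (cases "x \<in> topspace X")
    case True
    then have "pt_map X Z (\<phi> \<circ> \<psi>) x \<in> topspace (sob_top Z)"
      using pt_map_in_sob_pts[OF frame_hom_comp[OF \<phi> \<psi>]] topspace_sob_top by blast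
    then show ?thesis
      unfolding sober_comp_def using True s_map_pt_map[OF \<phi> \<psi> True] inv_into_f_f[OF inj_on_lam_sob_top]
      by simp
  qed (simp add: sober_comp_def pt_map_def)
qed

lemma sober_iso_of_frame_iso:
  assumes \<phi>: "frame_hom X Y \<phi>" and \<psi>: "frame_hom Y X \<psi>"
    and \<phi>\<psi>: "\<And>U. openin X U \<Longrightarrow> \<phi> (\<psi> U) = U" and \<psi>\<phi>: "\<And>V. openin Y V \<Longrightarrow> \<psi> (\<phi> V) = V"
  shows "\<exists>h\<in>sober_hom X Y. \<exists>k\<in>sober_hom Y X.
    sober_comp X Y X k h = sober_id X \<and> sober_comp Y X Y h k = sober_id Y"
proof -
  have "sober_comp X Y X (pt_map Y X \<psi>) (pt_map X Y \<phi>) = sober_id X"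
    unfolding sober_comp_pt_map[OF \<phi> \<psi>] sober_id_eq_pt_map using \<phi>\<psi> by (intro pt_map_cong) simp
  moreover have "sober_comp Y X Y (pt_map X Y \<phi>) (pt_map Y X \<psi>) = sober_id Y"
    unfolding sober_comp_pt_map[OF \<psi> \<phi>] sober_id_eq_pt_map using \<psi>\<phi> by (intro pt_map_cong) simp
  ultimately show ?thesis using pt_map_in_sober_hom[OF \<phi>] pt_map_in_sober_hom[OF \<psi>] by blast
qed

section \<open>Extending frame homomorphisms along locally closed sets\<close>

definition frame_ext :: "'b topology \<Rightarrow> ('b set \<Rightarrow> 'a set) \<Rightarrow> 'b set \<Rightarrow> 'a set" where
  "frame_ext Y \<phi> S = \<Union>{\<phi> U - \<phi> V | U V. openin Y U \<and> openin Y V \<and> U - V \<subseteq> S}"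

context
  fixes X :: "'a topology" and Y :: "'b topology" and \<phi>
  assumes \<phi>: "frame_hom X Y \<phi>"
begin

lemma frame_ext_mono: "S \<subseteq> T \<Longrightarrow> frame_ext Y \<phi> S \<subseteq> frame_ext Y \<phi> T"
  unfolding frame_ext_def by blast

lemma frame_ext_subset: "frame_ext Y \<phi> S \<subseteq> topspace X"
  unfolding frame_ext_def using frame_hom_subset[OF \<phi>] by blast

lemma frame_ext_diff:
  assumes U: "openin Y U" and V: "openin Y V"
  shows "frame_ext Y \<phi> (U - V) = \<phi> U - \<phi> V"
proof
  show "\<phi> U - \<phi> V \<subseteq> frame_ext Y \<phi> (U - V)" unfolding frame_ext_def using U V by blast
  show "frame_ext Y \<phi> (U - V) \<subseteq> \<phi> U - \<phi> V"
  proof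
    fix y assume "y \<in> frame_ext Y \<phi> (U - V)"
    then obtain U' V' where U'V': "openin Y U'" "openin Y V'" "U' - V' \<subseteq> U - V" "y \<in> \<phi> U' - \<phi> V'"
      unfolding frame_ext_def by blast
    have "\<phi> U' \<subseteq> \<phi> U \<union> \<phi> V'"
      using frame_hom_mono[OF \<phi> U'V'(1), of "U \<union> V'"] frame_hom_Un[OF \<phi> U U'V'(2)] U U'V' by blast
    moreover have "\<phi> U' \<inter> \<phi> V \<subseteq> \<phi> V'"
      using frame_hom_mono[OF \<phi> _ U'V'(2), of "U' \<inter> V"] frame_homD(3)[OF \<phi> U'V'(1) V] U'V' V by blast
    ultimately show "y \<in> \<phi> U - \<phi> V" using U'V'(4) by blast
  qed
qed

lemma frame_ext_open: "openin Y U \<Longrightarrow> frame_ext Y \<phi> U = \<phi> U"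
  using frame_ext_diff[OF _ openin_empty] frame_hom_empty[OF \<phi>] by simp

lemma frame_ext_Int: "frame_ext Y \<phi> (S \<inter> T) = frame_ext Y \<phi> S \<inter> frame_ext Y \<phi> T"
proof
  show "frame_ext Y \<phi> (S \<inter> T) \<subseteq> frame_ext Y \<phi> S \<inter> frame_ext Y \<phi> T" using frame_ext_mono by blast
  show "frame_ext Y \<phi> S \<inter> frame_ext Y \<phi> T \<subseteq> frame_ext Y \<phi> (S \<inter> T)"
  proof
    fix y assume "y \<in> frame_ext Y \<phi> S \<inter> frame_ext Y \<phi> T"
    then obtain U1 V1 U2 V2 where a: "openin Y U1" "openin Y V1" "U1 - V1 \<subseteq> S" "y \<in> \<phi> U1 - \<phi> V1"
      "openin Y U2" "openin Y V2" "U2 - V2 \<subseteq> T" "y \<in> \<phi> U2 - \<phi> V2"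
      unfolding frame_ext_def by blast
    have "y \<in> \<phi> (U1 \<inter> U2) - \<phi> (V1 \<union> V2)"
      using a frame_homD(3)[OF \<phi> a(1) a(5)] frame_hom_Un[OF \<phi> a(2) a(6)] by blast
    moreover have "(U1 \<inter> U2) - (V1 \<union> V2) \<subseteq> S \<inter> T" using a by blast
    moreover have "openin Y (U1 \<inter> U2)" "openin Y (V1 \<union> V2)" using a by auto
    ultimately show "y \<in> frame_ext Y \<phi> (S \<inter> T)" unfolding frame_ext_def by blast
  qed
qed

lemma frame_hom_Int_INT:
  assumes "finite K" "\<forall>k\<in>K. openin Y (w k)" "openin Y U"
  shows "openin Y (U \<inter> \<Inter>(w ` K)) \<and> \<phi> (U \<inter> \<Inter>(w ` K)) = \<phi> U \<inter> \<Inter>((\<phi> \<circ> w) ` K)"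
  using assms
proof (induction K rule: finite_induct)
  case (insert k K)
  have "U \<inter> \<Inter>(w ` insert k K) = (U \<inter> \<Inter>(w ` K)) \<inter> w k" by auto
  moreover have "openin Y (U \<inter> \<Inter>(w ` K))" using insert by blast
  ultimately show ?case using frame_homD(3)[OF \<phi>] insert by auto
qed simp

text \<open>If \<open>y\<close> lay in no \<open>\<phi> (u s) - \<phi> (v s)\<close>, intersecting \<open>U\<close> with the \<open>v s\<close> whose image
  contains \<open>y\<close> and joining \<open>V\<close> with the remaining \<open>u s\<close> would give opens \<open>U' \<subseteq> V'\<close>
  with \<open>y \<in> \<phi> U' - \<phi> V'\<close>, contradicting monotonicity of \<open>\<phi>\<close>.\<close>

lemma frame_hom_diff_cover:
  assumes fin: "finite S" and op: "\<forall>s\<in>S. openin Y (u s) \<and> openin Y (v s)"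
    and U: "openin Y U" and V: "openin Y V"
    and cov: "U - V \<subseteq> (\<Union>s\<in>S. u s - v s)" and y: "y \<in> \<phi> U - \<phi> V"
  shows "\<exists>s\<in>S. y \<in> \<phi> (u s) - \<phi> (v s)"
proof (rule ccontr)
  assume no: "\<not> ?thesis"
  define S1 where "S1 = {s\<in>S. y \<in> \<phi> (v s)}"
  define U' where "U' = U \<inter> \<Inter>(v ` S1)"
  define V' where "V' = \<Union>(insert V (u ` (S - S1)))"
  have U': "openin Y U' \<and> \<phi> U' = \<phi> U \<inter> \<Inter>((\<phi> \<circ> v) ` S1)"
    unfolding U'_def by (rule frame_hom_Int_INT) (use fin op U S1_def in auto)
  have V'_parts: "\<forall>W \<in> insert V (u ` (S - S1)). openin Y W" using op V by auto
  then have V': "openin Y V'" unfolding V'_def by (intro openin_Union) auto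
  have "\<phi> V' = \<Union>(\<phi> ` insert V (u ` (S - S1)))"
    unfolding V'_def using V'_parts frame_homD(4)[OF \<phi>] by blast
  then have "y \<in> \<phi> U' - \<phi> V'" using U' y no S1_def by auto
  then have "\<not> U' \<subseteq> V'" using frame_hom_mono[OF \<phi>] U' V' by blast
  then obtain x where "x \<in> U'" "x \<notin> V'" by blast
  moreover from this obtain s where "s \<in> S" "x \<in> u s - v s" using cov unfolding U'_def V'_def by blast
  ultimately show False unfolding U'_def V'_def by (cases "s \<in> S1") auto
qed

lemma frame_ext_UN_diff:
  assumes fin: "finite S" and op: "\<forall>s\<in>S. openin Y (u s) \<and> openin Y (v s)"
  shows "frame_ext Y \<phi> (\<Union>s\<in>S. u s - v s) = (\<Union>s\<in>S. \<phi> (u s) - \<phi> (v s))"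
proof
  show "(\<Union>s\<in>S. \<phi> (u s) - \<phi> (v s)) \<subseteq> frame_ext Y \<phi> (\<Union>s\<in>S. u s - v s)"
    using frame_ext_diff frame_ext_mono[of "u _ - v _" "\<Union>s\<in>S. u s - v s"] op by blast
  show "frame_ext Y \<phi> (\<Union>s\<in>S. u s - v s) \<subseteq> (\<Union>s\<in>S. \<phi> (u s) - \<phi> (v s))"
    using frame_hom_diff_cover[OF fin op] unfolding frame_ext_def by blast
qed

lemma frame_ext_eq_Union_diff:
  "frame_ext Y \<phi> S = \<Union>{frame_ext Y \<phi> (U - V) | U V. openin Y U \<and> openin Y V \<and> U - V \<subseteq> S}"
proof -
  have "{frame_ext Y \<phi> (U - V) | U V. openin Y U \<and> openin Y V \<and> U - V \<subseteq> S} =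
        {\<phi> U - \<phi> V | U V. openin Y U \<and> openin Y V \<and> U - V \<subseteq> S}"
    using frame_ext_diff by metis
  then show ?thesis unfolding frame_ext_def by simp
qed

end

section \<open>The atom space of a spatial \<open>T\<^sub>D\<close> MT-algebra\<close>

locale stdmt =
  fixes M :: "'b mt"
  assumes STDMT: "STDMT M"

sublocale stdmt \<subseteq> mt_boolean M
  using STDMT unfolding STDMT_def MT_algebra_def by unfold_locales blast

context stdmt
begin

abbreviation "At \<equiv> mt_atoms M"
abbreviation "\<alpha> \<equiv> atoms_below M"
abbreviation "Op \<equiv> mt_opens M"

lemma box_in: "a \<in> C \<Longrightarrow> mt_box M a \<in> C"
  using STDMT unfolding STDMT_def MT_algebra_def by blast

lemma box_top: "mt_box M (mt_top M) = mt_top M"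
  using STDMT unfolding STDMT_def MT_algebra_def by blast

lemma box_meet: "a \<in> C \<Longrightarrow> b \<in> C \<Longrightarrow> mt_box M (mt_meet M a b) = mt_meet M (mt_box M a) (mt_box M b)"
  using STDMT unfolding STDMT_def MT_algebra_def by blast

lemma box_le: "a \<in> C \<Longrightarrow> mt_le M (mt_box M a) a"
  using STDMT unfolding STDMT_def MT_algebra_def by blast

lemma box_le_box_box: "a \<in> C \<Longrightarrow> mt_le M (mt_box M a) (mt_box M (mt_box M a))"
  using STDMT unfolding STDMT_def MT_algebra_def by blast

lemma TD_decomposition: "a \<in> C \<Longrightarrow> \<exists>S. S \<subseteq> mt_lc M \<and> a = mt_Join M S"
  using STDMT unfolding STDMT_def TD_algebra_def by blast

lemma inj_on_atoms_below: "inj_on \<alpha> C"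
  using STDMT unfolding STDMT_def spatial_def by blast

lemma atoms_below_iff: "x \<in> \<alpha> a \<longleftrightarrow> x \<in> At \<and> mt_le M x a"
  unfolding atoms_below_def by blast

lemma atoms_below_subset: "\<alpha> a \<subseteq> At"
  unfolding atoms_below_def by blast

lemma atoms_below_mono: "a \<in> C \<Longrightarrow> b \<in> C \<Longrightarrow> mt_le M a b \<Longrightarrow> \<alpha> a \<subseteq> \<alpha> b"
  unfolding atoms_below_def using le_trans atom_in by blast

lemma atoms_below_meet: "a \<in> C \<Longrightarrow> b \<in> C \<Longrightarrow> \<alpha> (mt_meet M a b) = \<alpha> a \<inter> \<alpha> b"
  unfolding atoms_below_def by (auto simp: le_meet_iff atom_in)

lemma atoms_below_inj: "a \<in> C \<Longrightarrow> b \<in> C \<Longrightarrow> \<alpha> a = \<alpha> b \<Longrightarrow> a = b"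
  using inj_on_atoms_below inj_onD by metis

lemma le_iff_atoms_below_subset: assumes "a \<in> C" "b \<in> C" shows "mt_le M a b \<longleftrightarrow> \<alpha> a \<subseteq> \<alpha> b"
proof
  assume "\<alpha> a \<subseteq> \<alpha> b"
  then have "\<alpha> (mt_meet M a b) = \<alpha> a" using atoms_below_meet[OF assms] by blast
  then have "mt_meet M a b = a" using atoms_below_inj[OF meet_in[OF assms] assms(1)] by blast
  then show "mt_le M a b" using le_iff_meet[OF assms] by blast
next
  show "mt_le M a b \<Longrightarrow> \<alpha> a \<subseteq> \<alpha> b" using atoms_below_mono[OF assms] .
qed

lemma atoms_below_Join: assumes S: "S \<subseteq> C" shows "\<alpha> (mt_Join M S) = \<Union>(\<alpha> ` S)"
proof
  have "\<alpha> s \<subseteq> \<alpha> (mt_Join M S)" if "s \<in> S" for s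
    using atoms_below_mono[OF _ Join_in[OF S] Join_upper[OF S that]] that S by blast
  then show "\<Union>(\<alpha> ` S) \<subseteq> \<alpha> (mt_Join M S)" by blast
  show "\<alpha> (mt_Join M S) \<subseteq> \<Union>(\<alpha> ` S)"
  proof
    fix x assume "x \<in> \<alpha> (mt_Join M S)"
    then have "x \<in> At" "mt_le M x (mt_Join M S)" using atoms_below_iff by auto
    then obtain s where "s \<in> S" "mt_le M x s" using atom_le_Join[OF _ S] by blast
    then show "x \<in> \<Union>(\<alpha> ` S)" using \<open>x \<in> At\<close> atoms_below_iff by blast
  qed
qed

lemma atoms_below_atom: assumes x: "x \<in> At" shows "\<alpha> x = {x}"
proof -
  have "y = x" if "y \<in> At" "mt_le M y x" for y
    using that x unfolding mt_atoms_def by blast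
  then show ?thesis using x le_refl atom_in unfolding atoms_below_def by blast
qed

lemma atoms_below_Join_atoms: assumes X: "X \<subseteq> At" shows "mt_Join M X \<in> C" "\<alpha> (mt_Join M X) = X"
proof -
  have XC: "X \<subseteq> C" using X atom_in by blast
  show "mt_Join M X \<in> C" using Join_in XC by blast
  have "\<alpha> ` X = (\<lambda>x. {x}) ` X" using atoms_below_atom X by auto
  then show "\<alpha> (mt_Join M X) = X" using atoms_below_Join[OF XC] by auto
qed

lemma atoms_below_top: "\<alpha> (mt_top M) = At"
  using atoms_below_subset le_top atom_in unfolding atoms_below_def by blast

lemma atoms_below_bot: "\<alpha> (mt_bot M) = {}"
proof -
  have "x \<notin> \<alpha> (mt_bot M)" for x
  proof
    assume "x \<in> \<alpha> (mt_bot M)"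
    then have "x \<in> At" "mt_le M x (mt_bot M)" using atoms_below_iff by auto
    then have "x = mt_bot M" using le_antisym bot_le bot_in atom_in by blast
    then show False using \<open>x \<in> At\<close> unfolding mt_atoms_def by blast
  qed
  then show ?thesis by blast
qed

lemma atoms_below_join: "a \<in> C \<Longrightarrow> b \<in> C \<Longrightarrow> \<alpha> (mt_join M a b) = \<alpha> a \<union> \<alpha> b"
  unfolding mt_join_def using atoms_below_Join[of "{a,b}"] by simp

lemma atoms_below_neg: assumes a: "a \<in> C" shows "\<alpha> (mt_neg M a) = At - \<alpha> a"
proof -
  have "\<alpha> a \<union> \<alpha> (mt_neg M a) = At" using atoms_below_join[OF a neg_in[OF a]] join_neg[OF a] atoms_below_top by simp
  moreover have "\<alpha> a \<inter> \<alpha> (mt_neg M a) = {}" using atoms_below_meet[OF a neg_in[OF a]] meet_neg[OF a] atoms_below_bot by simp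
  ultimately show ?thesis by blast
qed

lemma box_mono: assumes "a \<in> C" "b \<in> C" "mt_le M a b" shows "mt_le M (mt_box M a) (mt_box M b)"
proof -
  have "mt_meet M a b = a" using meet_absorb assms by blast
  then have "mt_box M a = mt_meet M (mt_box M a) (mt_box M b)" using box_meet assms by metis
  then show ?thesis using meet_le2 box_in assms by metis
qed

lemma box_idem: "a \<in> C \<Longrightarrow> mt_box M (mt_box M a) = mt_box M a"
  using le_antisym box_in box_le box_le_box_box by metis

lemma opens_iff: "u \<in> Op \<longleftrightarrow> u \<in> C \<and> mt_box M u = u"
  unfolding mt_opens_def by blast

lemma opens_subset: "Op \<subseteq> C" unfolding mt_opens_def by blast

lemma box_in_opens: "a \<in> C \<Longrightarrow> mt_box M a \<in> Op"
  using opens_iff box_in box_idem by blast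

lemma top_in_opens: "mt_top M \<in> Op" using opens_iff box_top top_in by blast

lemma meet_in_opens: "u \<in> Op \<Longrightarrow> v \<in> Op \<Longrightarrow> mt_meet M u v \<in> Op"
  using opens_iff box_meet meet_in by metis

lemma Join_in_opens: assumes S: "S \<subseteq> Op" shows "mt_Join M S \<in> Op"
proof -
  have SC: "S \<subseteq> C" using S opens_subset by blast
  have J: "mt_Join M S \<in> C" using Join_in SC by blast
  have "mt_le M s (mt_box M (mt_Join M S))" if "s \<in> S" for s
    using box_mono[of s "mt_Join M S"] that S SC J Join_upper opens_iff by (metis subsetD)
  then have "mt_le M (mt_Join M S) (mt_box M (mt_Join M S))" using Join_least SC J box_in by blast
  then show ?thesis using le_antisym box_le J box_in opens_iff by metis
qed

lemma istopology_at_space: "istopology (\<lambda>W. \<exists>u\<in>Op. W = \<alpha> u)"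
  unfolding istopology_def
proof (intro conjI allI impI)
  fix S T assume "\<exists>u\<in>Op. S = \<alpha> u" "\<exists>u\<in>Op. T = \<alpha> u"
  then obtain u v where "u \<in> Op" "v \<in> Op" "S = \<alpha> u" "T = \<alpha> v" by blast
  moreover have "u \<in> C" "v \<in> C" using \<open>u \<in> Op\<close> \<open>v \<in> Op\<close> opens_subset by auto
  ultimately have "S \<inter> T = \<alpha> (mt_meet M u v)" "mt_meet M u v \<in> Op"
    using atoms_below_meet meet_in_opens by auto
  then show "\<exists>u\<in>Op. S \<inter> T = \<alpha> u" by blast
next
  fix K assume K: "\<forall>W\<in>K. \<exists>u\<in>Op. W = \<alpha> u"
  define S where "S = {u\<in>Op. \<alpha> u \<in> K}"
  have "\<Union>K = \<Union>(\<alpha> ` S)"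
  proof
    show "\<Union>(\<alpha> ` S) \<subseteq> \<Union>K" unfolding S_def by auto
    show "\<Union>K \<subseteq> \<Union>(\<alpha> ` S)"
    proof
      fix x assume "x \<in> \<Union>K"
      then obtain W where W: "W \<in> K" "x \<in> W" by blast
      then obtain u where "u \<in> Op" "W = \<alpha> u" using K by blast
      then have "u \<in> S" "x \<in> \<alpha> u" unfolding S_def using W by auto
      then show "x \<in> \<Union>(\<alpha> ` S)" by blast
    qed
  qed
  have SO: "S \<subseteq> Op" unfolding S_def by blast
  then have "S \<subseteq> C" using opens_subset by blast
  then have "\<Union>(\<alpha> ` S) = \<alpha> (mt_Join M S)" using atoms_below_Join by simp
  then show "\<exists>u\<in>Op. \<Union>K = \<alpha> u" using Join_in_opens[OF SO] \<open>\<Union>K = \<Union>(\<alpha> ` S)\<close> by auto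
qed

lemma openin_at_space: "openin (at_space M) W \<longleftrightarrow> (\<exists>u\<in>Op. W = \<alpha> u)"
  unfolding at_space_def topology_inverse'[OF istopology_at_space] by (rule refl)

lemma topspace_at_space: "topspace (at_space M) = At"
proof -
  have "openin (at_space M) At" unfolding openin_at_space using top_in_opens atoms_below_top by force
  moreover have "\<And>W. openin (at_space M) W \<Longrightarrow> W \<subseteq> At" using openin_at_space atoms_below_subset by blast
  ultimately show ?thesis unfolding topspace_def by blast
qed

lemma lc_subset: "mt_lc M \<subseteq> C" unfolding mt_lc_def by blast

lemma lc_iff_atoms_below: "a \<in> mt_lc M \<longleftrightarrow> a \<in> C \<and> (\<exists>u\<in>Op. \<exists>v\<in>Op. \<alpha> a = \<alpha> u - \<alpha> v)"
proof
  assume "a \<in> mt_lc M"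
  then obtain b c where bc: "a \<in> C" "b \<in> C" "c \<in> C" "a = mt_meet M (mt_box M b) (mt_dia M c)"
    unfolding mt_lc_def by blast
  have nc: "mt_neg M c \<in> C" using neg_in bc by blast
  have d: "mt_dia M c = mt_neg M (mt_box M (mt_neg M c))" unfolding mt_dia_def ..
  have "\<alpha> a = \<alpha> (mt_box M b) \<inter> \<alpha> (mt_dia M c)"
    using bc(4) atoms_below_meet[OF box_in[OF bc(2)]] d neg_in[OF box_in[OF nc]] by simp
  also have "\<alpha> (mt_dia M c) = At - \<alpha> (mt_box M (mt_neg M c))"
    using d atoms_below_neg[OF box_in[OF nc]] by simp
  finally have "\<alpha> a = \<alpha> (mt_box M b) \<inter> (At - \<alpha> (mt_box M (mt_neg M c)))" .
  also have "\<dots> = \<alpha> (mt_box M b) - \<alpha> (mt_box M (mt_neg M c))" using atoms_below_subset by blast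
  finally show "a \<in> C \<and> (\<exists>u\<in>Op. \<exists>v\<in>Op. \<alpha> a = \<alpha> u - \<alpha> v)"
    using bc box_in_opens nc by blast
next
  assume "a \<in> C \<and> (\<exists>u\<in>Op. \<exists>v\<in>Op. \<alpha> a = \<alpha> u - \<alpha> v)"
  then obtain u v where uv: "a \<in> C" "u \<in> Op" "v \<in> Op" "\<alpha> a = \<alpha> u - \<alpha> v" by blast
  have uC: "u \<in> C" and vC: "v \<in> C" using uv opens_subset by auto
  have bu: "mt_box M u = u" and bv: "mt_box M v = v" using uv opens_iff by auto
  have "mt_dia M (mt_neg M v) = mt_neg M v"
    unfolding mt_dia_def using neg_neg[OF vC] bv by simp
  then have e: "mt_meet M (mt_box M u) (mt_dia M (mt_neg M v)) = mt_meet M u (mt_neg M v)" using bu by simp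
  have "\<alpha> (mt_meet M u (mt_neg M v)) = \<alpha> u \<inter> (At - \<alpha> v)"
    using atoms_below_meet[OF uC neg_in[OF vC]] atoms_below_neg[OF vC] by simp
  also have "\<dots> = \<alpha> a" using uv atoms_below_subset by blast
  finally have "a = mt_meet M u (mt_neg M v)"
    using atoms_below_inj[OF uv(1) meet_in[OF uC neg_in[OF vC]]] by simp
  then have "a = mt_meet M (mt_box M u) (mt_dia M (mt_neg M v))" using e by simp
  then show "a \<in> mt_lc M" unfolding mt_lc_def using uv(1) uC vC neg_in by blast
qed

lemma open_in_lc: assumes u: "u \<in> Op" shows "u \<in> mt_lc M"
proof -
  have "\<alpha> (mt_box M (mt_bot M)) \<subseteq> \<alpha> (mt_bot M)"
    using atoms_below_mono[OF box_in[OF bot_in] bot_in box_le[OF bot_in]] .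
  then have "\<alpha> u = \<alpha> u - \<alpha> (mt_box M (mt_bot M))" using atoms_below_bot by blast
  moreover have "u \<in> C" using u opens_subset by blast
  ultimately show ?thesis unfolding lc_iff_atoms_below using u box_in_opens[OF bot_in] by blast
qed

lemma atom_in_lc: assumes x: "x \<in> At" shows "x \<in> mt_lc M"
proof -
  obtain S where S: "S \<subseteq> mt_lc M" "x = mt_Join M S" using TD_decomposition atom_in x by blast
  have SC: "S \<subseteq> C" using S lc_subset by blast
  have "mt_le M x (mt_Join M S)" using le_refl[OF atom_in[OF x]] S(2) by simp
  then obtain s where s: "s \<in> S" "mt_le M x s" using atom_le_Join[OF x SC] by blast
  have "mt_le M s x" using Join_upper[OF SC s(1)] S(2) by simp
  then have "s = x" using le_antisym s SC atom_in x by blast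
  then show ?thesis using s S by blast
qed

lemma TD_space_at_space: "TD_space (at_space M)"
  unfolding TD_space_def topspace_at_space
proof
  fix x assume x: "x \<in> At"
  then obtain u v where uv: "u \<in> Op" "v \<in> Op" "\<alpha> x = \<alpha> u - \<alpha> v" using atom_in_lc lc_iff_atoms_below by blast
  have ax: "\<alpha> x = {x}" using atoms_below_atom x by blast
  have ou: "openin (at_space M) (\<alpha> u)" using openin_at_space uv by blast
  have cl: "closedin (at_space M) (At - \<alpha> v)"
  proof -
    have "At - (At - \<alpha> v) = \<alpha> v" using atoms_below_subset by blast
    then show ?thesis unfolding closedin_def topspace_at_space openin_at_space using uv by auto
  qed
  have "{x} = (At - \<alpha> v) \<inter> \<alpha> u" using uv ax atoms_below_subset by blast
  then have "closedin (subtopology (at_space M) (\<alpha> u)) {x}"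
    unfolding closedin_subtopology using cl by blast
  then show "\<exists>U. openin (at_space M) U \<and> x \<in> U \<and> closedin (subtopology (at_space M) U) {x}"
    using ou uv ax by blast
qed

lemma Join_lc_below: assumes a: "a \<in> C" shows "mt_Join M {x \<in> mt_lc M. mt_le M x a} = a"
proof -
  let ?S = "{x \<in> mt_lc M. mt_le M x a}"
  have SC: "?S \<subseteq> C" using lc_subset by blast
  have "\<alpha> (mt_Join M ?S) = \<alpha> a"
  proof
    show "\<alpha> (mt_Join M ?S) \<subseteq> \<alpha> a" using atoms_below_Join[OF SC] atoms_below_mono SC a by blast
    show "\<alpha> a \<subseteq> \<alpha> (mt_Join M ?S)"
    proof
      fix y assume "y \<in> \<alpha> a"
      then have "y \<in> At" "mt_le M y a" using atoms_below_iff by auto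
      then have "y \<in> ?S" "y \<in> \<alpha> y" using atom_in_lc atoms_below_atom by auto
      then show "y \<in> \<alpha> (mt_Join M ?S)" using atoms_below_Join[OF SC] by blast
    qed
  qed
  then show ?thesis using atoms_below_inj Join_in SC a by blast
qed

lemma lc_choice:
  assumes "S \<subseteq> mt_lc M"
  shows "\<exists>u v. \<forall>s\<in>S. openin (at_space M) (u s) \<and> openin (at_space M) (v s) \<and> \<alpha> s = u s - v s"
proof -
  have "\<forall>s\<in>S. \<exists>U V. openin (at_space M) U \<and> openin (at_space M) V \<and> \<alpha> s = U - V"
  proof
    fix s assume "s \<in> S"
    then obtain u v where "u \<in> Op" "v \<in> Op" "\<alpha> s = \<alpha> u - \<alpha> v"
      using assms lc_iff_atoms_below by blast
    then show "\<exists>U V. openin (at_space M) U \<and> openin (at_space M) V \<and> \<alpha> s = U - V"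
      unfolding openin_at_space by blast
  qed
  then show ?thesis by metis
qed

lemma atoms_below_lc_below:
  assumes a: "a \<in> C"
  shows "\<alpha> ` {x \<in> mt_lc M. mt_le M x a} =
    {U - V | U V. openin (at_space M) U \<and> openin (at_space M) V \<and> U - V \<subseteq> \<alpha> a}"
proof (intro equalityI subsetI)
  fix Z assume "Z \<in> \<alpha> ` {x \<in> mt_lc M. mt_le M x a}"
  then obtain x where x: "x \<in> mt_lc M" "mt_le M x a" "Z = \<alpha> x" by blast
  then obtain u v where "u \<in> Op" "v \<in> Op" "\<alpha> x = \<alpha> u - \<alpha> v" using lc_iff_atoms_below by blast
  moreover have "\<alpha> x \<subseteq> \<alpha> a" using atoms_below_mono x a lc_subset by blast
  ultimately show "Z \<in> {U - V | U V. openin (at_space M) U \<and> openin (at_space M) V \<and> U - V \<subseteq> \<alpha> a}"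
    unfolding openin_at_space using x(3) by blast
next
  fix Z assume "Z \<in> {U - V | U V. openin (at_space M) U \<and> openin (at_space M) V \<and> U - V \<subseteq> \<alpha> a}"
  then obtain u v where uv: "u \<in> Op" "v \<in> Op" "\<alpha> u - \<alpha> v \<subseteq> \<alpha> a" "Z = \<alpha> u - \<alpha> v"
    unfolding openin_at_space by blast
  moreover obtain x where x: "x \<in> C" "\<alpha> x = \<alpha> u - \<alpha> v"
    using atoms_below_Join_atoms atoms_below_subset by (metis Diff_subset subset_trans)
  ultimately have "x \<in> mt_lc M" "mt_le M x a" using lc_iff_atoms_below le_iff_atoms_below_subset a by auto
  then show "Z \<in> \<alpha> ` {x \<in> mt_lc M. mt_le M x a}" using x uv(4) by blast
qed

lemma opens_at_space_family:
  assumes "\<forall>W\<in>K. openin (at_space M) W"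
  shows "\<exists>S\<subseteq>Op. K = \<alpha> ` S"
proof (intro exI conjI)
  show "K = \<alpha> ` {u \<in> Op. \<alpha> u \<in> K}"
  proof
    show "K \<subseteq> \<alpha> ` {u \<in> Op. \<alpha> u \<in> K}"
    proof
      fix W assume "W \<in> K"
      moreover from this obtain u where "u \<in> Op" "W = \<alpha> u" using assms openin_at_space by blast
      ultimately show "W \<in> \<alpha> ` {u \<in> Op. \<alpha> u \<in> K}" by blast
    qed
  qed blast
qed blast

end

section \<open>Proximity morphisms and their frame homomorphisms\<close>

lemma prox_hom_funcset: "f \<in> prox_hom M N \<Longrightarrow> f \<in> mt_carrier M \<rightarrow> mt_carrier N"
  unfolding prox_hom_def proximity_def by simp

lemma prox_hom_in_carrier: "f \<in> prox_hom M N \<Longrightarrow> a \<in> mt_carrier M \<Longrightarrow> f a \<in> mt_carrier N"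
  using prox_hom_funcset funcset_mem by blast

lemma prox_hom_in_opens: "f \<in> prox_hom M N \<Longrightarrow> a \<in> mt_opens M \<Longrightarrow> f a \<in> mt_opens N"
  unfolding prox_hom_def proximity_def by simp

lemma prox_hom_top: "f \<in> prox_hom M N \<Longrightarrow> f (mt_top M) = mt_top N"
  unfolding prox_hom_def proximity_def by simp

lemma prox_hom_Join_opens:
  "f \<in> prox_hom M N \<Longrightarrow> S \<subseteq> mt_opens M \<Longrightarrow> f (mt_Join M S) = mt_Join N (f ` S)"
  unfolding prox_hom_def proximity_def by simp

lemma prox_hom_meet:
  "f \<in> prox_hom M N \<Longrightarrow> a \<in> mt_carrier M \<Longrightarrow> b \<in> mt_carrier M \<Longrightarrow> f (mt_meet M a b) = mt_meet N (f a) (f b)"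
  unfolding prox_hom_def proximity_def by simp

lemma prox_hom_Join_lc:
  "f \<in> prox_hom M N \<Longrightarrow> finite S \<Longrightarrow> S \<subseteq> mt_lc M \<Longrightarrow> f (mt_Join M S) = mt_Join N (f ` S)"
  unfolding prox_hom_def proximity_def by simp

lemma prox_hom_eq_Join_lc:
  "f \<in> prox_hom M N \<Longrightarrow> a \<in> mt_carrier M \<Longrightarrow> f a = mt_Join N {f x | x. x \<in> mt_lc M \<and> mt_le M x a}"
  unfolding prox_hom_def proximity_def by simp

lemma prox_hom_extensional: "f \<in> prox_hom M N \<Longrightarrow> f \<in> extensional (mt_carrier M)"
  unfolding prox_hom_def by simp

definition prox_frame :: "'b mt \<Rightarrow> 'c mt \<Rightarrow> ('b \<Rightarrow> 'c) \<Rightarrow> 'b set \<Rightarrow> 'c set" where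
  "prox_frame M N f W = {y \<in> mt_atoms N. \<exists>u\<in>mt_opens M. W = atoms_below M u \<and> mt_le N y (f u)}"

context
  fixes M :: "'b mt" and N :: "'c mt"
  assumes sM: "stdmt M" and sN: "stdmt N"
begin

interpretation M: stdmt M by (rule sM)
interpretation N: stdmt N by (rule sN)

lemma prox_hom_mono:
  assumes f: "f \<in> prox_hom M N" and a: "a \<in> mt_carrier M" and b: "b \<in> mt_carrier M" and le: "mt_le M a b"
  shows "mt_le N (f a) (f b)"
proof -
  have "mt_meet M a b = a" using M.meet_absorb[OF a b le] .
  then have "f a = mt_meet N (f a) (f b)" using prox_hom_meet[OF f a b] by simp
  then show ?thesis using N.meet_le2[OF prox_hom_in_carrier[OF f a] prox_hom_in_carrier[OF f b]] by simp
qed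

lemma prox_hom_bot: assumes f: "f \<in> prox_hom M N" shows "f (mt_bot M) = mt_bot N"
  using prox_hom_Join_opens[OF f, of "{}"] unfolding mt_bot_def by simp

text \<open>Applying (P3) to the locally closed elements \<open>u\<close> and \<open>\<not> u\<close> shows that a proximity
  morphism sends the complement of an open to the complement of its image. Since every locally
  closed element is \<open>u \<and> \<not> v\<close> for opens \<open>u, v\<close>, by (P2) and (P4) a proximity morphism
  is determined by its restriction to opens.\<close>

lemma prox_hom_neg_open:
  assumes f: "f \<in> prox_hom M N" and u: "u \<in> mt_opens M"
  shows "atoms_below N (f (mt_neg M u)) = mt_atoms N - atoms_below N (f u)"
proof -
  have uC: "u \<in> mt_carrier M" using u M.opens_subset by blast
  have nC: "mt_neg M u \<in> mt_carrier M" using M.neg_in[OF uC] .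
  have ulc: "u \<in> mt_lc M" using M.open_in_lc[OF u] .
  have "atoms_below M (mt_neg M u) = atoms_below M (mt_top M) - atoms_below M u"
    using M.atoms_below_neg[OF uC] M.atoms_below_top by simp
  then have nlc: "mt_neg M u \<in> mt_lc M"
    unfolding M.lc_iff_atoms_below using nC M.top_in_opens u by blast
  have fu: "f u \<in> mt_carrier N" and fn: "f (mt_neg M u) \<in> mt_carrier N"
    using prox_hom_in_carrier[OF f] uC nC by auto
  have "f (mt_Join M {u, mt_neg M u}) = mt_Join N {f u, f (mt_neg M u)}"
    using prox_hom_Join_lc[OF f, of "{u, mt_neg M u}"] ulc nlc by simp
  moreover have "mt_Join M {u, mt_neg M u} = mt_top M"
    using M.join_neg[OF uC] unfolding mt_join_def .
  ultimately have "mt_join N (f u) (f (mt_neg M u)) = mt_top N"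
    using prox_hom_top[OF f] unfolding mt_join_def by simp
  then have 1: "atoms_below N (f u) \<union> atoms_below N (f (mt_neg M u)) = mt_atoms N"
    using N.atoms_below_join[OF fu fn] N.atoms_below_top by simp
  have "f (mt_meet M u (mt_neg M u)) = mt_meet N (f u) (f (mt_neg M u))"
    using prox_hom_meet[OF f uC nC] .
  then have "mt_meet N (f u) (f (mt_neg M u)) = mt_bot N"
    using M.meet_neg[OF uC] prox_hom_bot[OF f] by simp
  then have 2: "atoms_below N (f u) \<inter> atoms_below N (f (mt_neg M u)) = {}"
    using N.atoms_below_meet[OF fu fn] N.atoms_below_bot by simp
  show ?thesis using 1 2 by blast
qed

lemma prox_hom_lc_diff:
  assumes f: "f \<in> prox_hom M N" and a: "a \<in> mt_carrier M" and u: "u \<in> mt_opens M" and v: "v \<in> mt_opens M"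
    and e: "atoms_below M a = atoms_below M u - atoms_below M v"
  shows "atoms_below N (f a) = atoms_below N (f u) - atoms_below N (f v)"
proof -
  have uC: "u \<in> mt_carrier M" and vC: "v \<in> mt_carrier M" using u v M.opens_subset by auto
  have nC: "mt_neg M v \<in> mt_carrier M" using M.neg_in[OF vC] .
  have "atoms_below M (mt_meet M u (mt_neg M v)) = atoms_below M u \<inter> (mt_atoms M - atoms_below M v)"
    using M.atoms_below_meet[OF uC nC] M.atoms_below_neg[OF vC] by simp
  also have "\<dots> = atoms_below M a" using e M.atoms_below_subset[of u] by blast
  finally have "a = mt_meet M u (mt_neg M v)"
    using M.atoms_below_inj[OF a M.meet_in[OF uC nC]] by simp
  then have "f a = mt_meet N (f u) (f (mt_neg M v))" using prox_hom_meet[OF f uC nC] by simp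
  then have "atoms_below N (f a) = atoms_below N (f u) \<inter> (mt_atoms N - atoms_below N (f v))"
    using N.atoms_below_meet[OF prox_hom_in_carrier[OF f uC] prox_hom_in_carrier[OF f nC]] prox_hom_neg_open[OF f v] by simp
  then show ?thesis using N.atoms_below_subset[of "f u"] by blast
qed

lemma prox_hom_eqI:
  assumes f: "f \<in> prox_hom M N" and g: "g \<in> prox_hom M N" and eq: "\<And>u. u \<in> mt_opens M \<Longrightarrow> f u = g u"
  shows "f = g"
proof
  fix a
  show "f a = g a"
  proof (cases "a \<in> mt_carrier M")
    case False then show ?thesis using prox_hom_extensional[OF f] prox_hom_extensional[OF g] unfolding extensional_def by auto
  next
    case True
    have lc: "f x = g x" if x: "x \<in> mt_lc M" for x
    proof -
      obtain u v where uv: "x \<in> mt_carrier M" "u \<in> mt_opens M" "v \<in> mt_opens M"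
        "atoms_below M x = atoms_below M u - atoms_below M v"
        using x M.lc_iff_atoms_below by blast
      have "atoms_below N (f x) = atoms_below N (g x)"
        using prox_hom_lc_diff[OF f uv] prox_hom_lc_diff[OF g uv] eq uv by simp
      then show ?thesis using N.atoms_below_inj[OF prox_hom_in_carrier[OF f uv(1)] prox_hom_in_carrier[OF g uv(1)]] by simp
    qed
    have "{f x | x. x \<in> mt_lc M \<and> mt_le M x a} = {g x | x. x \<in> mt_lc M \<and> mt_le M x a}"
      using lc by metis
    then show ?thesis using prox_hom_eq_Join_lc[OF f True] prox_hom_eq_Join_lc[OF g True] by simp
  qed
qed

lemma at_map_eq_pt_map: "at_map M N f = pt_map (at_space N) (at_space M) (prox_frame M N f)"
proof
  fix y
  show "at_map M N f y = pt_map (at_space N) (at_space M) (prox_frame M N f) y"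
    unfolding at_map_def pt_map_def prox_frame_def N.topspace_at_space M.openin_at_space
    by auto
qed

lemma prox_frame_atoms_below:
  assumes u: "u \<in> mt_opens M" and h: "h u \<in> mt_carrier N"
  shows "prox_frame M N h (atoms_below M u) = atoms_below N (h u)"
proof -
  have "(\<exists>u'\<in>mt_opens M. atoms_below M u = atoms_below M u' \<and> mt_le N y (h u')) \<longleftrightarrow> mt_le N y (h u)" for y
    using M.atoms_below_inj M.opens_subset u by blast
  then show ?thesis unfolding prox_frame_def atoms_below_def by auto
qed

lemma frame_hom_prox_frame:
  assumes f: "f \<in> prox_hom M N"
  shows "frame_hom (at_space N) (at_space M) (prox_frame M N f)"
  unfolding frame_hom_def
proof (intro conjI allI impI)
  have f_opens: "prox_frame M N f (atoms_below M u) = atoms_below N (f u)" if "u \<in> mt_opens M" for u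
    using prox_frame_atoms_below[OF that] prox_hom_in_carrier[OF f] M.opens_subset that by blast
  fix V assume "openin (at_space M) V"
  then show "openin (at_space N) (prox_frame M N f V)"
    using f_opens prox_hom_in_opens[OF f] unfolding M.openin_at_space N.openin_at_space by blast
next
  show "prox_frame M N f (topspace (at_space M)) = topspace (at_space N)"
    using prox_frame_atoms_below[OF M.top_in_opens] prox_hom_in_carrier[OF f M.top_in] prox_hom_top[OF f]
    by (simp add: M.topspace_at_space N.topspace_at_space M.atoms_below_top N.atoms_below_top)
next
  fix U V assume "openin (at_space M) U" "openin (at_space M) V"
  then obtain u v where uv: "u \<in> mt_opens M" "v \<in> mt_opens M" "U = atoms_below M u" "V = atoms_below M v"
    unfolding M.openin_at_space by blast
  then have uC: "u \<in> mt_carrier M" and vC: "v \<in> mt_carrier M" using M.opens_subset by auto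
  have "U \<inter> V = atoms_below M (mt_meet M u v)" using uv M.atoms_below_meet[OF uC vC] by simp
  then have "prox_frame M N f (U \<inter> V) = atoms_below N (f (mt_meet M u v))"
    using prox_frame_atoms_below[OF M.meet_in_opens[OF uv(1,2)]] prox_hom_in_carrier[OF f M.meet_in[OF uC vC]]
    by simp
  also have "\<dots> = atoms_below N (f u) \<inter> atoms_below N (f v)"
    using prox_hom_meet[OF f uC vC] N.atoms_below_meet[OF prox_hom_in_carrier[OF f uC] prox_hom_in_carrier[OF f vC]]
    by simp
  also have "\<dots> = prox_frame M N f U \<inter> prox_frame M N f V"
    using prox_frame_atoms_below[of u f, OF uv(1) prox_hom_in_carrier[OF f uC]]
      prox_frame_atoms_below[of v f, OF uv(2) prox_hom_in_carrier[OF f vC]] uv(3,4) by simp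
  finally show "prox_frame M N f (U \<inter> V) = prox_frame M N f U \<inter> prox_frame M N f V" .
next
  fix K assume "\<forall>U\<in>K. openin (at_space M) U"
  then obtain S where S: "S \<subseteq> mt_opens M" "K = atoms_below M ` S"
    using M.opens_at_space_family by blast
  have SC: "S \<subseteq> mt_carrier M" using S M.opens_subset by blast
  have fSC: "f ` S \<subseteq> mt_carrier N" using SC prox_hom_in_carrier[OF f] by blast
  have "\<Union>K = atoms_below M (mt_Join M S)" using S M.atoms_below_Join[OF SC] by simp
  then have "prox_frame M N f (\<Union>K) = atoms_below N (f (mt_Join M S))"
    using prox_frame_atoms_below[OF M.Join_in_opens[OF S(1)]] prox_hom_in_carrier[OF f M.Join_in[OF SC]]
    by simp
  also have "\<dots> = \<Union>(atoms_below N ` f ` S)"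
    using prox_hom_Join_opens[OF f S(1)] N.atoms_below_Join[OF fSC] by simp
  also have "\<dots> = \<Union>(prox_frame M N f ` K)"
  proof -
    have "prox_frame M N f (atoms_below M s) = atoms_below N (f s)" if "s \<in> S" for s
      using prox_frame_atoms_below[of s f] that S SC prox_hom_in_carrier[OF f] by blast
    then show ?thesis using S(2) by (auto simp: image_image)
  qed
  finally show "prox_frame M N f (\<Union>K) = \<Union>(prox_frame M N f ` K)" .
qed

end

section \<open>Proximity morphisms from frame homomorphisms\<close>

definition frame_prox :: "'b mt \<Rightarrow> 'c mt \<Rightarrow> ('b set \<Rightarrow> 'c set) \<Rightarrow> 'b \<Rightarrow> 'c" where
  "frame_prox M N \<phi> = restrict (\<lambda>a. mt_Join N (frame_ext (at_space M) \<phi> (atoms_below M a))) (mt_carrier M)"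

context
  fixes M :: "'b mt" and N :: "'c mt" and \<phi>
  assumes sM: "stdmt M" and sN: "stdmt N" and \<phi>: "frame_hom (at_space N) (at_space M) \<phi>"
begin

interpretation M: stdmt M by (rule sM)
interpretation N: stdmt N by (rule sN)

lemma frame_prox_in_carrier: "a \<in> mt_carrier M \<Longrightarrow> frame_prox M N \<phi> a \<in> mt_carrier N"
  and atoms_below_frame_prox:
    "a \<in> mt_carrier M \<Longrightarrow> atoms_below N (frame_prox M N \<phi> a) = frame_ext (at_space M) \<phi> (atoms_below M a)"
proof -
  have "frame_ext (at_space M) \<phi> (atoms_below M a) \<subseteq> mt_atoms N"
    using frame_ext_subset[OF \<phi>] N.topspace_at_space by simp
  then show "a \<in> mt_carrier M \<Longrightarrow> frame_prox M N \<phi> a \<in> mt_carrier N"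
    and "a \<in> mt_carrier M \<Longrightarrow> atoms_below N (frame_prox M N \<phi> a) = frame_ext (at_space M) \<phi> (atoms_below M a)"
    unfolding frame_prox_def using N.atoms_below_Join_atoms by simp_all
qed

lemma frame_prox_eqI:
  assumes a: "a \<in> mt_carrier M" and b: "b \<in> mt_carrier N"
    and eq: "frame_ext (at_space M) \<phi> (atoms_below M a) = atoms_below N b"
  shows "frame_prox M N \<phi> a = b"
  using N.atoms_below_inj[OF frame_prox_in_carrier[OF a] b] atoms_below_frame_prox[OF a] eq by simp

lemma frame_ext_opens: "u \<in> mt_opens M \<Longrightarrow> frame_ext (at_space M) \<phi> (atoms_below M u) = \<phi> (atoms_below M u)"
  by (rule frame_ext_open[OF \<phi>]) (auto simp: M.openin_at_space)

lemma atoms_below_frame_prox_open: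
  "u \<in> mt_opens M \<Longrightarrow> atoms_below N (frame_prox M N \<phi> u) = \<phi> (atoms_below M u)"
  using atoms_below_frame_prox frame_ext_opens M.opens_subset by (simp add: subset_iff)

lemma frame_prox_in_opens:
  assumes u: "u \<in> mt_opens M"
  shows "frame_prox M N \<phi> u \<in> mt_opens N"
proof -
  have "openin (at_space M) (atoms_below M u)" unfolding M.openin_at_space using u by blast
  then obtain w where w: "w \<in> mt_opens N" "\<phi> (atoms_below M u) = atoms_below N w"
    using frame_homD(1)[OF \<phi>] unfolding N.openin_at_space by blast
  have "frame_prox M N \<phi> u = w"
    using u w M.opens_subset N.opens_subset frame_ext_opens[OF u] by (intro frame_prox_eqI) auto
  then show ?thesis using w by simp
qed

lemma frame_prox_top: "frame_prox M N \<phi> (mt_top M) = mt_top N"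
proof (rule frame_prox_eqI[OF M.top_in N.top_in])
  show "frame_ext (at_space M) \<phi> (atoms_below M (mt_top M)) = atoms_below N (mt_top N)"
    using frame_ext_opens[OF M.top_in_opens] frame_homD(2)[OF \<phi>]
    by (simp add: M.atoms_below_top N.atoms_below_top M.topspace_at_space N.topspace_at_space)
qed

lemma frame_prox_meet:
  assumes a: "a \<in> mt_carrier M" and b: "b \<in> mt_carrier M"
  shows "frame_prox M N \<phi> (mt_meet M a b) = mt_meet N (frame_prox M N \<phi> a) (frame_prox M N \<phi> b)"
proof (rule frame_prox_eqI)
  let ?g = "frame_prox M N \<phi>"
  show "frame_ext (at_space M) \<phi> (atoms_below M (mt_meet M a b)) = atoms_below N (mt_meet N (?g a) (?g b))"
    using M.atoms_below_meet[OF a b] frame_ext_Int[OF \<phi>] atoms_below_frame_prox a b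
      N.atoms_below_meet[OF frame_prox_in_carrier[OF a] frame_prox_in_carrier[OF b]] by simp
qed (use a b M.meet_in N.meet_in frame_prox_in_carrier in auto)

lemma frame_prox_Join_opens:
  assumes S: "S \<subseteq> mt_opens M"
  shows "frame_prox M N \<phi> (mt_Join M S) = mt_Join N (frame_prox M N \<phi> ` S)"
proof (rule frame_prox_eqI)
  let ?g = "frame_prox M N \<phi>"
  have SC: "S \<subseteq> mt_carrier M" using S M.opens_subset by blast
  then have gS: "?g ` S \<subseteq> mt_carrier N" using frame_prox_in_carrier by blast
  show "mt_Join M S \<in> mt_carrier M" "mt_Join N (?g ` S) \<in> mt_carrier N"
    using M.Join_in[OF SC] N.Join_in[OF gS] .
  have "\<And>U. U \<in> atoms_below M ` S \<Longrightarrow> openin (at_space M) U"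
    using S unfolding M.openin_at_space by blast
  then have "\<phi> (\<Union>(atoms_below M ` S)) = \<Union>(\<phi> ` atoms_below M ` S)"
    by (rule frame_homD(4)[OF \<phi>])
  then have "frame_ext (at_space M) \<phi> (atoms_below M (mt_Join M S)) = \<Union>(\<phi> ` atoms_below M ` S)"
    using frame_ext_opens[OF M.Join_in_opens[OF S]] M.atoms_below_Join[OF SC] by simp
  also have "\<dots> = \<Union>(atoms_below N ` ?g ` S)"
    using atoms_below_frame_prox_open S by (auto simp: image_image)
  also have "\<dots> = atoms_below N (mt_Join N (?g ` S))"
    using N.atoms_below_Join[OF gS] by simp
  finally show "frame_ext (at_space M) \<phi> (atoms_below M (mt_Join M S)) = atoms_below N (mt_Join N (?g ` S))" .
qed

lemma frame_prox_Join_lc: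
  assumes fin: "finite S" and S: "S \<subseteq> mt_lc M"
  shows "frame_prox M N \<phi> (mt_Join M S) = mt_Join N (frame_prox M N \<phi> ` S)"
proof (rule frame_prox_eqI)
  let ?g = "frame_prox M N \<phi>"
  have SC: "S \<subseteq> mt_carrier M" using S M.lc_subset by blast
  then have gS: "?g ` S \<subseteq> mt_carrier N" using frame_prox_in_carrier by blast
  show "mt_Join M S \<in> mt_carrier M" "mt_Join N (?g ` S) \<in> mt_carrier N"
    using M.Join_in[OF SC] N.Join_in[OF gS] .
  obtain u v where uv: "\<forall>s\<in>S. openin (at_space M) (u s) \<and> openin (at_space M) (v s) \<and>
      atoms_below M s = u s - v s"
    using M.lc_choice[OF S] by blast
  have "frame_ext (at_space M) \<phi> (atoms_below M (mt_Join M S)) = (\<Union>s\<in>S. \<phi> (u s) - \<phi> (v s))"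
    using M.atoms_below_Join[OF SC] uv frame_ext_UN_diff[OF \<phi> fin, of u v] by simp
  also have "\<dots> = (\<Union>s\<in>S. atoms_below N (?g s))"
    using uv SC atoms_below_frame_prox frame_ext_diff[OF \<phi>] by (auto simp: subset_iff)
  also have "\<dots> = atoms_below N (mt_Join N (?g ` S))"
    using N.atoms_below_Join[OF gS] by (simp add: image_image)
  finally show "frame_ext (at_space M) \<phi> (atoms_below M (mt_Join M S)) = atoms_below N (mt_Join N (?g ` S))" .
qed

lemma frame_prox_eq_Join_lc:
  assumes a: "a \<in> mt_carrier M"
  shows "frame_prox M N \<phi> a = mt_Join N {frame_prox M N \<phi> x | x. x \<in> mt_lc M \<and> mt_le M x a}"
proof (rule frame_prox_eqI[OF a])
  let ?g = "frame_prox M N \<phi>"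
  let ?L = "{x \<in> mt_lc M. mt_le M x a}"
  have LC: "?L \<subseteq> mt_carrier M" using M.lc_subset by blast
  have T: "{?g x | x. x \<in> mt_lc M \<and> mt_le M x a} = ?g ` ?L" by blast
  then have TC: "{?g x | x. x \<in> mt_lc M \<and> mt_le M x a} \<subseteq> mt_carrier N"
    using LC frame_prox_in_carrier by auto
  then show "mt_Join N {?g x | x. x \<in> mt_lc M \<and> mt_le M x a} \<in> mt_carrier N"
    using N.Join_in by blast
  have "frame_ext (at_space M) \<phi> (atoms_below M a) =
      \<Union>{frame_ext (at_space M) \<phi> (U - V) | U V. openin (at_space M) U \<and> openin (at_space M) V \<and>
         U - V \<subseteq> atoms_below M a}"
    by (rule frame_ext_eq_Union_diff[OF \<phi>])
  also have "\<dots> = \<Union>(frame_ext (at_space M) \<phi> ` atoms_below M ` ?L)"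
    unfolding M.atoms_below_lc_below[OF a] by blast
  also have "\<dots> = \<Union>(atoms_below N ` ?g ` ?L)"
    using LC atoms_below_frame_prox by (auto simp: image_image subset_iff)
  also have "\<dots> = atoms_below N (mt_Join N {?g x | x. x \<in> mt_lc M \<and> mt_le M x a})"
    using N.atoms_below_Join[OF TC] T by simp
  finally show "frame_ext (at_space M) \<phi> (atoms_below M a) =
      atoms_below N (mt_Join N {?g x | x. x \<in> mt_lc M \<and> mt_le M x a})" .
qed

lemma frame_prox_in_prox_hom: "frame_prox M N \<phi> \<in> prox_hom M N"
proof -
  let ?g = "frame_prox M N \<phi>"
  have "?g \<in> mt_carrier M \<rightarrow> mt_carrier N" using frame_prox_in_carrier by blast
  moreover have "\<forall>a\<in>mt_opens M. \<forall>b\<in>mt_opens M. ?g (mt_meet M a b) = mt_meet N (?g a) (?g b)"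
    using frame_prox_meet M.opens_subset by blast
  moreover have "?g \<in> extensional (mt_carrier M)" unfolding frame_prox_def by simp
  ultimately show ?thesis
    unfolding prox_hom_def proximity_def
    using frame_prox_in_opens frame_prox_top frame_prox_meet frame_prox_Join_opens frame_prox_Join_lc
      frame_prox_eq_Join_lc
    by simp
qed

lemma prox_frame_frame_prox:
  assumes u: "u \<in> mt_opens M"
  shows "prox_frame M N (frame_prox M N \<phi>) (atoms_below M u) = \<phi> (atoms_below M u)"
proof -
  have "frame_prox M N \<phi> u \<in> mt_carrier N" using u M.opens_subset frame_prox_in_carrier by blast
  then show ?thesis
    using prox_frame_atoms_below[OF sM sN u] atoms_below_frame_prox_open[OF u] by simp
qed

end

section \<open>The powerset algebra of a \<open>T\<^sub>D\<close> space\<close>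

definition powerset_mt :: "'a topology \<Rightarrow> 'a set mt" where
  "powerset_mt X = \<lparr>mt_carrier = Pow (topspace X), mt_le = (\<subseteq>), mt_box = (\<lambda>a. X interior_of a)\<rparr>"

context
  fixes X :: "'a topology"
begin

abbreviation "T \<equiv> topspace X"

lemma powerset_mt_simps [simp]:
  "mt_carrier (powerset_mt X) = Pow T"
  "mt_le (powerset_mt X) = (\<subseteq>)"
  "mt_box (powerset_mt X) a = X interior_of a"
  unfolding powerset_mt_def by simp_all

lemma powerset_mt_lub:
  assumes S: "S \<subseteq> Pow T"
  shows "is_lub (powerset_mt X) S x \<longleftrightarrow> x = \<Union>S"
proof
  assume l: "is_lub (powerset_mt X) S x"
  have "\<Union>S \<in> Pow T" using S by blast
  then have "x \<subseteq> \<Union>S" using l unfolding is_lub_def by auto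
  moreover have "\<Union>S \<subseteq> x" using l unfolding is_lub_def by auto
  ultimately show "x = \<Union>S" by blast
qed (use S in \<open>auto simp: is_lub_def\<close>)

lemma powerset_mt_glb:
  assumes S: "S \<subseteq> Pow T" and ne: "S \<noteq> {}"
  shows "is_glb (powerset_mt X) S x \<longleftrightarrow> x = \<Inter>S"
proof
  assume l: "is_glb (powerset_mt X) S x"
  have "\<Inter>S \<in> Pow T" using S ne by blast
  then have "\<Inter>S \<subseteq> x" using l unfolding is_glb_def by auto
  moreover have "x \<subseteq> \<Inter>S" using l unfolding is_glb_def by auto
  ultimately show "x = \<Inter>S" by blast
next
  assume "x = \<Inter>S" then show "is_glb (powerset_mt X) S x" using S ne unfolding is_glb_def by auto
qed

lemma powerset_mt_Join: "S \<subseteq> Pow T \<Longrightarrow> mt_Join (powerset_mt X) S = \<Union>S"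
  unfolding mt_Join_def by (rule the_equality) (simp_all add: powerset_mt_lub)

lemma powerset_mt_meet: "a \<subseteq> T \<Longrightarrow> b \<subseteq> T \<Longrightarrow> mt_meet (powerset_mt X) a b = a \<inter> b"
  unfolding mt_meet_def mt_Meet_def by (rule the_equality) (simp_all add: powerset_mt_glb)

lemma powerset_mt_join: "a \<subseteq> T \<Longrightarrow> b \<subseteq> T \<Longrightarrow> mt_join (powerset_mt X) a b = a \<union> b"
  unfolding mt_join_def using powerset_mt_Join[of "{a,b}"] by simp

lemma powerset_mt_top: "mt_top (powerset_mt X) = T"
  unfolding mt_top_def using powerset_mt_Join[of "Pow T"] by simp

lemma powerset_mt_bot: "mt_bot (powerset_mt X) = {}"
  unfolding mt_bot_def using powerset_mt_Join[of "{}"] by simp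

lemma powerset_mt_neg: assumes a: "a \<subseteq> T" shows "mt_neg (powerset_mt X) a = T - a"
proof -
  have "(b \<in> Pow T \<and> mt_join (powerset_mt X) a b = mt_top (powerset_mt X) \<and> mt_meet (powerset_mt X) a b = mt_bot (powerset_mt X)) \<longleftrightarrow> b = T - a" for b
    using powerset_mt_join[OF a] powerset_mt_meet[OF a] powerset_mt_top powerset_mt_bot a by auto
  then show ?thesis unfolding mt_neg_def by simp
qed

lemma complete_boolean_powerset_mt: "complete_boolean (powerset_mt X)"
  unfolding complete_boolean_def
proof (intro conjI ballI allI impI)
  show "\<exists>x. is_lub (powerset_mt X) S x" if "S \<subseteq> mt_carrier (powerset_mt X)" for S using powerset_mt_lub that by auto
next
  fix a b c assume "a \<in> mt_carrier (powerset_mt X)" "b \<in> mt_carrier (powerset_mt X)" "c \<in> mt_carrier (powerset_mt X)"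
  then have abc: "a \<subseteq> T" "b \<subseteq> T" "c \<subseteq> T" by auto
  have "mt_meet (powerset_mt X) a (mt_join (powerset_mt X) b c) = a \<inter> (b \<union> c)"
    using powerset_mt_join[OF abc(2,3)] powerset_mt_meet[of a "b \<union> c"] abc by simp
  moreover have "mt_join (powerset_mt X) (mt_meet (powerset_mt X) a b) (mt_meet (powerset_mt X) a c) = (a \<inter> b) \<union> (a \<inter> c)"
    using powerset_mt_meet[OF abc(1,2)] powerset_mt_meet[OF abc(1,3)] powerset_mt_join[of "a \<inter> b" "a \<inter> c"] abc by auto
  ultimately show "mt_meet (powerset_mt X) a (mt_join (powerset_mt X) b c) =
        mt_join (powerset_mt X) (mt_meet (powerset_mt X) a b) (mt_meet (powerset_mt X) a c)" by auto
next
  fix a assume a: "a \<in> mt_carrier (powerset_mt X)"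
  show "\<exists>b\<in>mt_carrier (powerset_mt X). mt_join (powerset_mt X) a b = mt_top (powerset_mt X) \<and> mt_meet (powerset_mt X) a b = mt_bot (powerset_mt X)"
    using a powerset_mt_join powerset_mt_meet powerset_mt_top powerset_mt_bot by (intro bexI[of _ "T - a"]) auto
qed auto

lemma MT_algebra_powerset_mt: "MT_algebra (powerset_mt X)"
  unfolding MT_algebra_def
proof (intro conjI ballI)
  show "complete_boolean (powerset_mt X)" by (rule complete_boolean_powerset_mt)
  show "mt_box (powerset_mt X) a \<in> mt_carrier (powerset_mt X)" if "a \<in> mt_carrier (powerset_mt X)" for a
    using that interior_of_subset[of X a] by auto
  show "mt_box (powerset_mt X) (mt_top (powerset_mt X)) = mt_top (powerset_mt X)" using powerset_mt_top by simp
  show "mt_box (powerset_mt X) (mt_meet (powerset_mt X) a b) = mt_meet (powerset_mt X) (mt_box (powerset_mt X) a) (mt_box (powerset_mt X) b)"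
    if "a \<in> mt_carrier (powerset_mt X)" "b \<in> mt_carrier (powerset_mt X)" for a b
  proof -
    have ab: "a \<subseteq> T" "b \<subseteq> T" using that by auto
    have "X interior_of a \<subseteq> T" "X interior_of b \<subseteq> T"
      using ab interior_of_subset[of X a] interior_of_subset[of X b] by auto
    then show ?thesis using powerset_mt_meet[OF ab] powerset_mt_meet[of "X interior_of a" "X interior_of b"] interior_of_Int[of X a b] by simp
  qed
  show "mt_le (powerset_mt X) (mt_box (powerset_mt X) a) a" for a by (simp add: interior_of_subset)
  show "mt_le (powerset_mt X) (mt_box (powerset_mt X) a) (mt_box (powerset_mt X) (mt_box (powerset_mt X) a))" for a by simp
qed

lemma powerset_mt_atoms: "mt_atoms (powerset_mt X) = (\<lambda>x. {x}) ` T"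
proof
  show "mt_atoms (powerset_mt X) \<subseteq> (\<lambda>x. {x}) ` T"
  proof
    fix a assume a: "a \<in> mt_atoms (powerset_mt X)"
    then have aT: "a \<subseteq> T" and ne: "a \<noteq> {}" and mn: "\<forall>y\<subseteq>T. y \<subseteq> a \<longrightarrow> y = {} \<or> y = a"
      unfolding mt_atoms_def powerset_mt_bot by auto
    obtain x where x: "x \<in> a" using ne by blast
    have "{x} = a" using mn[rule_format, of "{x}"] x aT by blast
    then show "a \<in> (\<lambda>x. {x}) ` T" using x aT by blast
  qed
  show "(\<lambda>x. {x}) ` T \<subseteq> mt_atoms (powerset_mt X)"
    unfolding mt_atoms_def powerset_mt_bot by auto
qed

lemma powerset_mt_atoms_below: "a \<subseteq> T \<Longrightarrow> atoms_below (powerset_mt X) a = (\<lambda>x. {x}) ` a"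
  unfolding atoms_below_def powerset_mt_atoms by auto

lemma powerset_mt_opens: "mt_opens (powerset_mt X) = {u. openin X u}"
  unfolding mt_opens_def using interior_of_eq openin_subset by fastforce

lemma spatial_powerset_mt: "spatial (powerset_mt X)"
  unfolding spatial_def
proof (rule inj_onI)
  fix a b
  assume "a \<in> mt_carrier (powerset_mt X)" "b \<in> mt_carrier (powerset_mt X)"
    and "atoms_below (powerset_mt X) a = atoms_below (powerset_mt X) b"
  then have "(\<lambda>x. {x}) ` a = (\<lambda>x. {x}) ` b" using powerset_mt_atoms_below by auto
  then show "a = b" using inj_image_eq_iff[OF inj_singleton] by blast
qed

lemma singleton_in_lc_powerset_mt:
  assumes TD: "TD_space X" and x: "x \<in> T"
  shows "{x} \<in> mt_lc (powerset_mt X)"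
proof -
  obtain U where U: "openin X U" "closedin (subtopology X U) {x}"
    using TD x unfolding TD_space_def by blast
  then obtain c where c: "closedin X c" "{x} = c \<inter> U" unfolding closedin_subtopology by blast
  have cT: "c \<subseteq> T" and UT: "U \<subseteq> T" using closedin_subset[OF c(1)] openin_subset[OF U(1)] .
  have "X interior_of (T - c) = T - c" using c(1) by (simp add: interior_of_eq closedin_def)
  then have "mt_dia (powerset_mt X) c = c"
    unfolding mt_dia_def using powerset_mt_neg[OF cT] powerset_mt_neg[of "T - c"] cT by auto
  moreover have "mt_box (powerset_mt X) U = U" using U(1) by (simp add: interior_of_eq)
  ultimately have "{x} = mt_meet (powerset_mt X) (mt_box (powerset_mt X) U) (mt_dia (powerset_mt X) c)"
    using powerset_mt_meet[OF UT cT] c by auto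
  then show ?thesis unfolding mt_lc_def using x cT UT by auto
qed

lemma TD_algebra_powerset_mt:
  assumes "TD_space X"
  shows "TD_algebra (powerset_mt X)"
  unfolding TD_algebra_def
proof
  fix a assume a: "a \<in> mt_carrier (powerset_mt X)"
  have "a = mt_Join (powerset_mt X) ((\<lambda>x. {x}) ` a)" using a powerset_mt_Join[of "(\<lambda>x. {x}) ` a"] by auto
  moreover have "(\<lambda>x. {x}) ` a \<subseteq> mt_lc (powerset_mt X)" using a singleton_in_lc_powerset_mt[OF assms] by auto
  ultimately show "\<exists>S\<subseteq>mt_lc (powerset_mt X). a = mt_Join (powerset_mt X) S" by blast
qed

lemma STDMT_powerset_mt: "TD_space X \<Longrightarrow> STDMT (powerset_mt X)"
  unfolding STDMT_def
  using MT_algebra_powerset_mt TD_algebra_powerset_mt spatial_powerset_mt by blast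

end

lemma openin_at_space_powerset_mt:
  assumes "TD_space X"
  shows "openin (at_space (powerset_mt X)) W \<longleftrightarrow> (\<exists>U. openin X U \<and> W = (\<lambda>x. {x}) ` U)"
proof -
  interpret stdmt "powerset_mt X" using STDMT_powerset_mt[OF assms] unfolding stdmt_def .
  have "openin (at_space (powerset_mt X)) W \<longleftrightarrow> (\<exists>U. openin X U \<and> W = atoms_below (powerset_mt X) U)"
    unfolding openin_at_space powerset_mt_opens by simp
  also have "\<dots> \<longleftrightarrow> (\<exists>U. openin X U \<and> W = (\<lambda>x. {x}) ` U)"
    using openin_subset powerset_mt_atoms_below by metis
  finally show ?thesis .
qed

text \<open>The isomorphism is induced by \<open>x \<mapsto> {x}\<close>.\<close>

lemma TD_space_iso_at_space_powerset_mt: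
  assumes TD: "TD_space X"
  shows "\<exists>h\<in>sober_hom X (at_space (powerset_mt X)). \<exists>k\<in>sober_hom (at_space (powerset_mt X)) X.
    sober_comp X (at_space (powerset_mt X)) X k h = sober_id X \<and>
    sober_comp (at_space (powerset_mt X)) X (at_space (powerset_mt X)) h k = sober_id (at_space (powerset_mt X))"
proof (rule sober_iso_of_frame_iso)
  let ?A = "at_space (powerset_mt X)"
  have open_A: "openin ?A W \<longleftrightarrow> (\<exists>U. openin X U \<and> W = (\<lambda>x. {x}) ` U)" for W
    using openin_at_space_powerset_mt[OF TD] .
  have top_A: "topspace ?A = (\<lambda>x. {x}) ` topspace X"
    using stdmt.topspace_at_space[of "powerset_mt X"] STDMT_powerset_mt[OF TD] powerset_mt_atoms
    unfolding stdmt_def by simp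
  have preimage_image: "{x \<in> topspace X. {x} \<in> (\<lambda>x. {x}) ` U} = U" if "openin X U" for U
    using openin_subset[OF that] by blast
  show "frame_hom X ?A (\<lambda>W. {x \<in> topspace X. {x} \<in> W})"
    unfolding frame_hom_def open_A top_A using preimage_image by auto
  show "frame_hom ?A X (\<lambda>U. (\<lambda>x. {x}) ` U)"
    unfolding frame_hom_def open_A top_A by auto
  show "{x \<in> topspace X. {x} \<in> (\<lambda>x. {x}) ` U} = U" if "openin X U" for U
    using preimage_image[OF that] .
  show "(\<lambda>x. {x}) ` {x \<in> topspace X. {x} \<in> W} = W" if "openin ?A W" for W
    using that unfolding open_A using preimage_image by auto
qed

section \<open>The equivalence\<close>

lemma at_map_in_sober_hom:
  assumes "STDMT M" "STDMT N" and f: "f \<in> prox_hom M N"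
  shows "at_map M N f \<in> sober_hom (at_space N) (at_space M)"
proof -
  have sM: "stdmt M" and sN: "stdmt N" using assms unfolding stdmt_def by auto
  show ?thesis
    unfolding at_map_eq_pt_map[OF sM sN] by (rule pt_map_in_sober_hom[OF frame_hom_prox_frame[OF sM sN f]])
qed

lemma at_map_prox_id:
  assumes "STDMT M"
  shows "at_map M M (prox_id M) = sober_id (at_space M)"
proof -
  have sM: "stdmt M" using assms unfolding stdmt_def .
  interpret M: stdmt M by (rule sM)
  have "at_map M M (prox_id M) = pt_map (at_space M) (at_space M) (prox_frame M M (prox_id M))"
    by (rule at_map_eq_pt_map[OF sM sM])
  also have "\<dots> = pt_map (at_space M) (at_space M) (\<lambda>V. V)"
  proof (rule pt_map_cong)
    fix V assume "openin (at_space M) V"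
    then obtain u where u: "u \<in> mt_opens M" "V = atoms_below M u"
      unfolding M.openin_at_space by blast
    then have "u \<in> mt_carrier M" using M.opens_subset by blast
    then have "prox_id M u = u" unfolding prox_id_def using M.Join_lc_below by simp
    then show "prox_frame M M (prox_id M) V = V"
      using prox_frame_atoms_below[OF sM sM u(1)] \<open>u \<in> mt_carrier M\<close> u(2) by simp
  qed
  finally show ?thesis by (simp add: sober_id_eq_pt_map)
qed

lemma prox_comp_open:
  assumes sM1: "stdmt M1" and sM2: "stdmt M2" and sM3: "stdmt M3"
    and f: "f \<in> prox_hom M1 M2" and g: "g \<in> prox_hom M2 M3" and u: "u \<in> mt_opens M1"
  shows "prox_comp M1 M3 g f u = g (f u)"
proof -
  interpret M1: stdmt M1 by (rule sM1)
  interpret M3: stdmt M3 by (rule sM3)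
  have uC: "u \<in> mt_carrier M1" using u M1.opens_subset by blast
  let ?S = "{g (f x) | x. x \<in> mt_lc M1 \<and> mt_le M1 x u}"
  have "?S \<subseteq> mt_carrier M3"
    using prox_hom_in_carrier[OF g] prox_hom_in_carrier[OF f] M1.lc_subset by blast
  moreover have "g (f u) \<in> ?S" using M1.open_in_lc[OF u] M1.le_refl[OF uC] by blast
  moreover have "mt_le M3 s (g (f u))" if "s \<in> ?S" for s
  proof -
    obtain x where x: "s = g (f x)" "x \<in> mt_lc M1" "mt_le M1 x u" using \<open>s \<in> ?S\<close> by blast
    then have xC: "x \<in> mt_carrier M1" using M1.lc_subset by blast
    have "mt_le M2 (f x) (f u)" using prox_hom_mono[OF sM1 sM2 f xC uC x(3)] .
    then show ?thesis
      using prox_hom_mono[OF sM2 sM3 g prox_hom_in_carrier[OF f xC] prox_hom_in_carrier[OF f uC]] x(1) by simp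
  qed
  ultimately have "mt_Join M3 ?S = g (f u)" by (rule M3.Join_eq_greatest)
  then show ?thesis unfolding prox_comp_def using uC by simp
qed

lemma at_map_prox_comp:
  assumes "STDMT M1" "STDMT M2" "STDMT M3" and f: "f \<in> prox_hom M1 M2" and g: "g \<in> prox_hom M2 M3"
  shows "at_map M1 M3 (prox_comp M1 M3 g f) =
    sober_comp (at_space M3) (at_space M2) (at_space M1) (at_map M1 M2 f) (at_map M2 M3 g)"
proof -
  have sM1: "stdmt M1" and sM2: "stdmt M2" and sM3: "stdmt M3" using assms unfolding stdmt_def by auto
  interpret M1: stdmt M1 by (rule sM1)
  interpret M2: stdmt M2 by (rule sM2)
  have "sober_comp (at_space M3) (at_space M2) (at_space M1) (at_map M1 M2 f) (at_map M2 M3 g)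
      = pt_map (at_space M3) (at_space M1) (prox_frame M2 M3 g \<circ> prox_frame M1 M2 f)"
    unfolding at_map_eq_pt_map[OF sM1 sM2] at_map_eq_pt_map[OF sM2 sM3]
    by (rule sober_comp_pt_map[OF frame_hom_prox_frame[OF sM2 sM3 g] frame_hom_prox_frame[OF sM1 sM2 f]])
  also have "\<dots> = pt_map (at_space M3) (at_space M1) (prox_frame M1 M3 (prox_comp M1 M3 g f))"
  proof (rule pt_map_cong)
    fix V assume "openin (at_space M1) V"
    then obtain u where u: "u \<in> mt_opens M1" "V = atoms_below M1 u"
      unfolding M1.openin_at_space by blast
    have fu: "f u \<in> mt_opens M2" "f u \<in> mt_carrier M2"
      using prox_hom_in_opens[OF f u(1)] M2.opens_subset by auto
    then have "g (f u) \<in> mt_carrier M3" using prox_hom_in_carrier[OF g] by blast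
    then show "(prox_frame M2 M3 g \<circ> prox_frame M1 M2 f) V = prox_frame M1 M3 (prox_comp M1 M3 g f) V"
      using prox_frame_atoms_below[OF sM1 sM2 u(1)] prox_frame_atoms_below[OF sM2 sM3 fu(1)]
        prox_frame_atoms_below[OF sM1 sM3 u(1)] prox_comp_open[OF sM1 sM2 sM3 f g u(1)] fu(2) u(2)
      by simp
  qed
  also have "\<dots> = at_map M1 M3 (prox_comp M1 M3 g f)" using at_map_eq_pt_map[OF sM1 sM3] by simp
  finally show ?thesis by simp
qed

lemma inj_on_at_map:
  assumes sM: "stdmt M" and sN: "stdmt N"
  shows "inj_on (at_map M N) (prox_hom M N)"
proof (rule inj_onI)
  fix f g assume f: "f \<in> prox_hom M N" and g: "g \<in> prox_hom M N" and eq: "at_map M N f = at_map M N g"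
  interpret M: stdmt M by (rule sM)
  interpret N: stdmt N by (rule sN)
  show "f = g"
  proof (rule prox_hom_eqI[OF sM sN f g])
    fix u assume u: "u \<in> mt_opens M"
    then have uC: "u \<in> mt_carrier M" using M.opens_subset by blast
    have "openin (at_space M) (atoms_below M u)" unfolding M.openin_at_space using u by blast
    moreover have "pt_map (at_space N) (at_space M) (prox_frame M N f) =
        pt_map (at_space N) (at_space M) (prox_frame M N g)"
      using eq unfolding at_map_eq_pt_map[OF sM sN] .
    ultimately have "prox_frame M N f (atoms_below M u) = prox_frame M N g (atoms_below M u)"
      using pt_map_eqD[OF frame_hom_prox_frame[OF sM sN f] frame_hom_prox_frame[OF sM sN g]] by blast
    then have "atoms_below N (f u) = atoms_below N (g u)"
      using prox_frame_atoms_below[OF sM sN u] prox_hom_in_carrier[OF f uC] prox_hom_in_carrier[OF g uC] by simp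
    then show "f u = g u"
      using N.atoms_below_inj[OF prox_hom_in_carrier[OF f uC] prox_hom_in_carrier[OF g uC]] by simp
  qed
qed

lemma at_map_frame_prox:
  assumes sM: "stdmt M" and sN: "stdmt N" and \<phi>: "frame_hom (at_space N) (at_space M) \<phi>"
  shows "at_map M N (frame_prox M N \<phi>) = pt_map (at_space N) (at_space M) \<phi>"
  unfolding at_map_eq_pt_map[OF sM sN]
proof (rule pt_map_cong)
  fix V assume "openin (at_space M) V"
  then obtain u where "u \<in> mt_opens M" "V = atoms_below M u" unfolding stdmt.openin_at_space[OF sM] by blast
  then show "prox_frame M N (frame_prox M N \<phi>) V = \<phi> V" using prox_frame_frame_prox[OF sM sN \<phi>] by simp
qed

lemma bij_betw_at_map:
  assumes "STDMT M" "STDMT N"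
  shows "bij_betw (at_map M N) (prox_hom M N) (sober_hom (at_space N) (at_space M))"
proof -
  have sM: "stdmt M" and sN: "stdmt N" using assms unfolding stdmt_def by auto
  have "h \<in> at_map M N ` prox_hom M N" if h: "h \<in> sober_hom (at_space N) (at_space M)" for h
  proof -
    have \<phi>: "frame_hom (at_space N) (at_space M) (frame_of_sober (at_space N) h)"
      using frame_hom_frame_of_sober[OF h] .
    then have "at_map M N (frame_prox M N (frame_of_sober (at_space N) h)) = h"
      using at_map_frame_prox[OF sM sN] pt_map_frame_of_sober[OF h] by simp
    then show ?thesis using frame_prox_in_prox_hom[OF sM sN \<phi>] by (metis image_eqI)
  qed
  then show ?thesis
    unfolding bij_betw_def using inj_on_at_map[OF sM sN] at_map_in_sober_hom[OF assms] by blast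
qed

lemma TD_space_iso_at_space_STDMT:
  fixes X :: "'a topology"
  assumes "TD_space X"
  shows "\<exists>M :: 'a set mt. STDMT M \<and>
    (\<exists>h\<in>sober_hom X (at_space M). \<exists>k\<in>sober_hom (at_space M) X.
       sober_comp X (at_space M) X k h = sober_id X \<and>
       sober_comp (at_space M) X (at_space M) h k = sober_id (at_space M))"
  using STDMT_powerset_mt[OF assms] TD_space_iso_at_space_powerset_mt[OF assms] by blast

theorem corollary6p17:
  shows
   \<comment> \<open>the atom functor lands in T_D Top_S\<close>
   "(\<forall>M :: 'b mt. STDMT M \<longrightarrow> TD_space (at_space M))
    \<and> (\<forall>(M :: 'b mt) (N :: 'c mt) f. STDMT M \<and> STDMT N \<and> f \<in> prox_hom M N \<longrightarrow>
          at_map M N f \<in> sober_hom (at_space N) (at_space M))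
    \<comment> \<open>it preserves identities and (contravariantly) composition\<close>
    \<and> (\<forall>M :: 'b mt. STDMT M \<longrightarrow> at_map M M (prox_id M) = sober_id (at_space M))
    \<and> (\<forall>(M1 :: 'b mt) (M2 :: 'c mt) (M3 :: 'd mt) f g.
          STDMT M1 \<and> STDMT M2 \<and> STDMT M3 \<and> f \<in> prox_hom M1 M2 \<and> g \<in> prox_hom M2 M3 \<longrightarrow>
          at_map M1 M3 (prox_comp M1 M3 g f) =
          sober_comp (at_space M3) (at_space M2) (at_space M1) (at_map M1 M2 f) (at_map M2 M3 g))
    \<comment> \<open>it is fully faithful\<close>
    \<and> (\<forall>(M :: 'b mt) (N :: 'c mt). STDMT M \<and> STDMT N \<longrightarrow>
          bij_betw (at_map M N) (prox_hom M N) (sober_hom (at_space N) (at_space M)))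
    \<comment> \<open>it is essentially surjective onto T_D spaces\<close>
    \<and> (\<forall>X :: 'a topology. TD_space X \<longrightarrow>
          (\<exists>M :: 'a set mt. STDMT M \<and>
             (\<exists>h\<in>sober_hom X (at_space M). \<exists>k\<in>sober_hom (at_space M) X.
                sober_comp X (at_space M) X k h = sober_id X \<and>
                sober_comp (at_space M) X (at_space M) h k = sober_id (at_space M))))"
  by (intro conjI allI impI)
    (auto intro: stdmt.TD_space_at_space[unfolded stdmt_def] at_map_in_sober_hom at_map_prox_id
      at_map_prox_comp bij_betw_at_map TD_space_iso_at_space_STDMT)

end
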